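(* Let $X$ be a topological space and $\mathcal{F}:\mathfrak{Off}(X)^{op}\to\mathsf{Grp}$ a functor to small groupoids. If $\mathcal{F}$ satisfies the condition $\mathsf{sh}(2)$ (resp. $\mathsf{st}(2)$), then $\mathcal{F}$ satisfies the condition $\mathsf{sh}(n)$ (resp. $\mathsf{st}(n)$) for every $n\ge2$.
   Context: $\mathfrak{Off}(X)$ is the poset of open subsets of $X$; for $V\subseteq W$ write $x\mapsto x|_V$ for the functor $\mathcal{F}(W)\to\mathcal{F}(V)$; $U_{ij}=U_i\cap U_j$, $U_{ijk}=U_i\cap U_j\cap U_k$. For an integer $n\ge2$, $\mathcal{F}$ satisfies $\mathsf{sh}(n)$ if for every open $U$ and every open cover $U=U_1\cup\dots\cup U_n$, the natural functor from $\mathcal{F}(U)$ to the limit (equaliser) of the two functors $\prod_i\mathcal{F}(U_i)\rightrightarrows\prod_{i,j}\mathcal{F}(U_{ij})$ is an isomorphism of categories; this equaliser is the groupoid of families $(x_i\in\mathcal{F}(U_i))$ with $x_i|_{U_{ij}}=x_j|_{U_{ij}}$ and families of morphisms $f_i$ with $f_i|_{U_{ij}}=f_j|_{U_{ij}}$. $\mathcal{F}$ satisfies $\mathsf{st}(n)$ if for every such $U$ and cover, the natural functor from $\mathcal{F}(U)$ to the 2-limit of $\prod_i\mathcal{F}(U_i)\rightrightarrows\prod_{i,j}\mathcal{F}(U_{ij})\to\prod_{i,j,k}\mathcal{F}(U_{ijk})$ is an equivalence of categories; this 2-limit is the descent groupoid whose objects are $(x_i,\phi_{ij})$ with $x_i\in\mathcal{F}(U_i)$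 and isomorphisms $\phi_{ij}:x_i|_{U_{ij}}\to x_j|_{U_{ij}}$ in $\mathcal{F}(U_{ij})$ satisfying $\phi_{jk}|_{U_{ijk}}\circ\phi_{ij}|_{U_{ijk}}=\phi_{ik}|_{U_{ijk}}$, whose morphisms $(x_i,\phi_{ij})\to(y_i,\eta_{ij})$ are families $f_i:x_i\to y_i$ with $\eta_{ij}\circ f_i|_{U_{ij}}=f_j|_{U_{ij}}\circ\phi_{ij}$, and the natural functor sends $x$ to $(x|_{U_i},\mathrm{id})$. *)

theory Defs
  imports "HOL-Analysis.Analysis"
begin

text \<open>A (small) category: a set of objects, a set of arrows, domain, codomain,
  composition (Comp C g f = g o f, defined when Cod f = Dom g) and identities.\<close>

record ('o, 'm) cat =
  Obj  :: "'o set"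
  Arr  :: "'m set"
  Dom  :: "'m \<Rightarrow> 'o"
  Cod  :: "'m \<Rightarrow> 'o"
  Comp :: "'m \<Rightarrow> 'm \<Rightarrow> 'm"
  Ide  :: "'o \<Rightarrow> 'm"

definition is_category :: "('o, 'm, 'x) cat_scheme \<Rightarrow> bool" where
  "is_category C \<longleftrightarrow>
     (\<forall>f\<in>Arr C. Dom C f \<in> Obj C \<and> Cod C f \<in> Obj C) \<and>
     (\<forall>a\<in>Obj C. Ide C a \<in> Arr C \<and> Dom C (Ide C a) = a \<and> Cod C (Ide C a) = a) \<and>
     (\<forall>f\<in>Arr C. \<forall>g\<in>Arr C. Cod C f = Dom C g \<longrightarrow>
        Comp C g f \<in> Arr C \<and> Dom C (Comp C g f) = Dom C f \<and> Cod C (Comp C g f) = Cod C g) \<and>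
     (\<forall>f\<in>Arr C. Comp C (Ide C (Cod C f)) f = f \<and> Comp C f (Ide C (Dom C f)) = f) \<and>
     (\<forall>f\<in>Arr C. \<forall>g\<in>Arr C. \<forall>h\<in>Arr C. Cod C f = Dom C g \<longrightarrow> Cod C g = Dom C h \<longrightarrow>
        Comp C h (Comp C g f) = Comp C (Comp C h g) f)"

definition is_inverse :: "('o, 'm, 'x) cat_scheme \<Rightarrow> 'm \<Rightarrow> 'm \<Rightarrow> bool" where
  "is_inverse C f g \<longleftrightarrow> g \<in> Arr C \<and> Dom C g = Cod C f \<and> Cod C g = Dom C f \<and>
     Comp C g f = Ide C (Dom C f) \<and> Comp C f g = Ide C (Cod C f)"

definition is_groupoid :: "('o, 'm, 'x) cat_scheme \<Rightarrow> bool" where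
  "is_groupoid C \<longleftrightarrow> is_category C \<and> (\<forall>f\<in>Arr C. \<exists>g. is_inverse C f g)"

definition is_functor ::
  "('o, 'm, 'x) cat_scheme \<Rightarrow> ('p, 'n, 'y) cat_scheme \<Rightarrow> ('o \<Rightarrow> 'p) \<Rightarrow> ('m \<Rightarrow> 'n) \<Rightarrow> bool" where
  "is_functor C D Fo Fa \<longleftrightarrow>
     (\<forall>a\<in>Obj C. Fo a \<in> Obj D) \<and>
     (\<forall>f\<in>Arr C. Fa f \<in> Arr D \<and> Dom D (Fa f) = Fo (Dom C f) \<and> Cod D (Fa f) = Fo (Cod C f)) \<and>
     (\<forall>a\<in>Obj C. Fa (Ide C a) = Ide D (Fo a)) \<and>
     (\<forall>f\<in>Arr C. \<forall>g\<in>Arr C. Cod C f = Dom C g \<longrightarrow> Fa (Comp C g f) = Comp D (Fa g) (Fa f))"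

definition is_cat_iso ::
  "('o, 'm, 'x) cat_scheme \<Rightarrow> ('p, 'n, 'y) cat_scheme \<Rightarrow> ('o \<Rightarrow> 'p) \<Rightarrow> ('m \<Rightarrow> 'n) \<Rightarrow> bool" where
  "is_cat_iso C D Fo Fa \<longleftrightarrow> is_functor C D Fo Fa \<and>
     (\<exists>Go Ga. is_functor D C Go Ga \<and>
        (\<forall>a\<in>Obj C. Go (Fo a) = a) \<and> (\<forall>f\<in>Arr C. Ga (Fa f) = f) \<and>
        (\<forall>b\<in>Obj D. Fo (Go b) = b) \<and> (\<forall>g\<in>Arr D. Fa (Ga g) = g))"

definition is_nat_iso ::
  "('o, 'm, 'x) cat_scheme \<Rightarrow> ('p, 'n, 'y) cat_scheme \<Rightarrow> ('o \<Rightarrow> 'p) \<Rightarrow> ('m \<Rightarrow> 'n)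
     \<Rightarrow> ('o \<Rightarrow> 'p) \<Rightarrow> ('m \<Rightarrow> 'n) \<Rightarrow> ('o \<Rightarrow> 'n) \<Rightarrow> bool" where
  "is_nat_iso C D Fo Fa Go Ga eta \<longleftrightarrow>
     (\<forall>a\<in>Obj C. eta a \<in> Arr D \<and> Dom D (eta a) = Fo a \<and> Cod D (eta a) = Go a \<and>
                (\<exists>g. is_inverse D (eta a) g)) \<and>
     (\<forall>f\<in>Arr C. Comp D (eta (Cod C f)) (Fa f) = Comp D (Ga f) (eta (Dom C f)))"

definition is_cat_equiv ::
  "('o, 'm, 'x) cat_scheme \<Rightarrow> ('p, 'n, 'y) cat_scheme \<Rightarrow> ('o \<Rightarrow> 'p) \<Rightarrow> ('m \<Rightarrow> 'n) \<Rightarrow> bool" where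
  "is_cat_equiv C D Fo Fa \<longleftrightarrow> is_functor C D Fo Fa \<and>
     (\<exists>Go Ga eta eps. is_functor D C Go Ga \<and>
        is_nat_iso C C id id (Go \<circ> Fo) (Ga \<circ> Fa) eta \<and>
        is_nat_iso D D (Fo \<circ> Go) (Fa \<circ> Ga) id id eps)"

text \<open>A functor Off(X)^op \<rightarrow> Grp is given by: for every open U the groupoid FF U,
  and for open V \<subseteq> W the restriction functor F(W) \<rightarrow> F(V), with object part
  resO V W (x \<mapsto> x|_V) and arrow part resA V W.  Functoriality is strict.\<close>

definition grp_presheaf ::
  "'a topology \<Rightarrow> ('a set \<Rightarrow> ('o, 'm) cat) \<Rightarrow> ('a set \<Rightarrow> 'a set \<Rightarrow> 'o \<Rightarrow> 'o)
     \<Rightarrow> ('a set \<Rightarrow> 'a set \<Rightarrow> 'm \<Rightarrow> 'm) \<Rightarrow> bool" where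
  "grp_presheaf X FF resO resA \<longleftrightarrow>
     (\<forall>U. openin X U \<longrightarrow> is_groupoid (FF U)) \<and>
     (\<forall>V W. openin X V \<longrightarrow> openin X W \<longrightarrow> V \<subseteq> W \<longrightarrow>
        is_functor (FF W) (FF V) (resO V W) (resA V W)) \<and>
     (\<forall>W. openin X W \<longrightarrow> (\<forall>x\<in>Obj (FF W). resO W W x = x) \<and> (\<forall>f\<in>Arr (FF W). resA W W f = f)) \<and>
     (\<forall>V W Z. openin X V \<longrightarrow> openin X W \<longrightarrow> openin X Z \<longrightarrow> V \<subseteq> W \<longrightarrow> W \<subseteq> Z \<longrightarrow>
        (\<forall>x\<in>Obj (FF Z). resO V W (resO W Z x) = resO V Z x) \<and>
        (\<forall>f\<in>Arr (FF Z). resA V W (resA W Z f) = resA V Z f))"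

definition open_cover :: "'a topology \<Rightarrow> 'a set \<Rightarrow> nat \<Rightarrow> (nat \<Rightarrow> 'a set) \<Rightarrow> bool" where
  "open_cover X U n Us \<longleftrightarrow> openin X U \<and> (\<forall>i<n. openin X (Us i)) \<and> (\<Union>i<n. Us i) = U"

definition eq_cat ::
  "('a set \<Rightarrow> ('o, 'm) cat) \<Rightarrow> ('a set \<Rightarrow> 'a set \<Rightarrow> 'o \<Rightarrow> 'o) \<Rightarrow> ('a set \<Rightarrow> 'a set \<Rightarrow> 'm \<Rightarrow> 'm)
     \<Rightarrow> nat \<Rightarrow> (nat \<Rightarrow> 'a set) \<Rightarrow> (nat \<Rightarrow> 'o, nat \<Rightarrow> 'm) cat" where
  "eq_cat FF resO resA n Us =
     \<lparr> Obj = {x \<in> PiE {..<n} (\<lambda>i. Obj (FF (Us i))).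
               \<forall>i<n. \<forall>j<n. resO (Us i \<inter> Us j) (Us i) (x i) = resO (Us i \<inter> Us j) (Us j) (x j)},
       Arr = {f \<in> PiE {..<n} (\<lambda>i. Arr (FF (Us i))).
               \<forall>i<n. \<forall>j<n. resA (Us i \<inter> Us j) (Us i) (f i) = resA (Us i \<inter> Us j) (Us j) (f j)},
       Dom = (\<lambda>f. \<lambda>i\<in>{..<n}. Dom (FF (Us i)) (f i)),
       Cod = (\<lambda>f. \<lambda>i\<in>{..<n}. Cod (FF (Us i)) (f i)),
       Comp = (\<lambda>g f. \<lambda>i\<in>{..<n}. Comp (FF (Us i)) (g i) (f i)),
       Ide = (\<lambda>x. \<lambda>i\<in>{..<n}. Ide (FF (Us i)) (x i)) \<rparr>"

definition sh_cond ::
  "'a topology \<Rightarrow> ('a set \<Rightarrow> ('o, 'm) cat) \<Rightarrow> ('a set \<Rightarrow> 'a set \<Rightarrow> 'o \<Rightarrow> 'o)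
     \<Rightarrow> ('a set \<Rightarrow> 'a set \<Rightarrow> 'm \<Rightarrow> 'm) \<Rightarrow> nat \<Rightarrow> bool" where
  "sh_cond X FF resO resA n \<longleftrightarrow>
     (\<forall>U Us. open_cover X U n Us \<longrightarrow>
        is_cat_iso (FF U) (eq_cat FF resO resA n Us)
          (\<lambda>x. \<lambda>i\<in>{..<n}. resO (Us i) U x)
          (\<lambda>f. \<lambda>i\<in>{..<n}. resA (Us i) U f))"

text \<open>Arrows: triples
  (source, target, f) with f_i : x_i \<rightarrow> y_i compatible with the gluing data.\<close>

definition descent_objs ::
  "('a set \<Rightarrow> ('o, 'm) cat) \<Rightarrow> ('a set \<Rightarrow> 'a set \<Rightarrow> 'o \<Rightarrow> 'o) \<Rightarrow> ('a set \<Rightarrow> 'a set \<Rightarrow> 'm \<Rightarrow> 'm)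
     \<Rightarrow> nat \<Rightarrow> (nat \<Rightarrow> 'a set) \<Rightarrow> ((nat \<Rightarrow> 'o) \<times> (nat \<Rightarrow> nat \<Rightarrow> 'm)) set" where
  "descent_objs FF resO resA n Us =
     {(x, phi). x \<in> PiE {..<n} (\<lambda>i. Obj (FF (Us i))) \<and>
        phi \<in> PiE {..<n} (\<lambda>i. PiE {..<n} (\<lambda>j. Arr (FF (Us i \<inter> Us j)))) \<and>
        (\<forall>i<n. \<forall>j<n.
           Dom (FF (Us i \<inter> Us j)) (phi i j) = resO (Us i \<inter> Us j) (Us i) (x i) \<and>
           Cod (FF (Us i \<inter> Us j)) (phi i j) = resO (Us i \<inter> Us j) (Us j) (x j)) \<and>
        (\<forall>i<n. \<forall>j<n. \<forall>k<n.
           Comp (FF (Us i \<inter> Us j \<inter> Us k))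
             (resA (Us i \<inter> Us j \<inter> Us k) (Us j \<inter> Us k) (phi j k))
             (resA (Us i \<inter> Us j \<inter> Us k) (Us i \<inter> Us j) (phi i j))
           = resA (Us i \<inter> Us j \<inter> Us k) (Us i \<inter> Us k) (phi i k))}"

definition descent_cat ::
  "('a set \<Rightarrow> ('o, 'm) cat) \<Rightarrow> ('a set \<Rightarrow> 'a set \<Rightarrow> 'o \<Rightarrow> 'o) \<Rightarrow> ('a set \<Rightarrow> 'a set \<Rightarrow> 'm \<Rightarrow> 'm)
     \<Rightarrow> nat \<Rightarrow> (nat \<Rightarrow> 'a set)
     \<Rightarrow> ((nat \<Rightarrow> 'o) \<times> (nat \<Rightarrow> nat \<Rightarrow> 'm),
         ((nat \<Rightarrow> 'o) \<times> (nat \<Rightarrow> nat \<Rightarrow> 'm)) \<times> ((nat \<Rightarrow> 'o) \<times> (nat \<Rightarrow> nat \<Rightarrow> 'm)) \<times> (nat \<Rightarrow> 'm)) cat" where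
  "descent_cat FF resO resA n Us =
     \<lparr> Obj = descent_objs FF resO resA n Us,
       Arr = {(s, t, f). s \<in> descent_objs FF resO resA n Us \<and> t \<in> descent_objs FF resO resA n Us \<and>
               f \<in> PiE {..<n} (\<lambda>i. Arr (FF (Us i))) \<and>
               (\<forall>i<n. Dom (FF (Us i)) (f i) = fst s i \<and> Cod (FF (Us i)) (f i) = fst t i) \<and>
               (\<forall>i<n. \<forall>j<n.
                  Comp (FF (Us i \<inter> Us j)) (snd t i j) (resA (Us i \<inter> Us j) (Us i) (f i))
                  = Comp (FF (Us i \<inter> Us j)) (resA (Us i \<inter> Us j) (Us j) (f j)) (snd s i j))},
       Dom = (\<lambda>(s, t, f). s),
       Cod = (\<lambda>(s, t, f). t),
       Comp = (\<lambda>(s', t', g) (s, t, f). (s, t', \<lambda>i\<in>{..<n}. Comp (FF (Us i)) (g i) (f i))),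
       Ide = (\<lambda>s. (s, s, \<lambda>i\<in>{..<n}. Ide (FF (Us i)) (fst s i))) \<rparr>"

definition descent_functor_obj ::
  "('a set \<Rightarrow> ('o, 'm) cat) \<Rightarrow> ('a set \<Rightarrow> 'a set \<Rightarrow> 'o \<Rightarrow> 'o)
     \<Rightarrow> nat \<Rightarrow> 'a set \<Rightarrow> (nat \<Rightarrow> 'a set) \<Rightarrow> 'o \<Rightarrow> (nat \<Rightarrow> 'o) \<times> (nat \<Rightarrow> nat \<Rightarrow> 'm)" where
  "descent_functor_obj FF resO n U Us x =
     ((\<lambda>i\<in>{..<n}. resO (Us i) U x),
      (\<lambda>i\<in>{..<n}. \<lambda>j\<in>{..<n}.
         Ide (FF (Us i \<inter> Us j)) (resO (Us i \<inter> Us j) (Us i) (resO (Us i) U x))))"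

definition st_cond ::
  "'a topology \<Rightarrow> ('a set \<Rightarrow> ('o, 'm) cat) \<Rightarrow> ('a set \<Rightarrow> 'a set \<Rightarrow> 'o \<Rightarrow> 'o)
     \<Rightarrow> ('a set \<Rightarrow> 'a set \<Rightarrow> 'm \<Rightarrow> 'm) \<Rightarrow> nat \<Rightarrow> bool" where
  "st_cond X FF resO resA n \<longleftrightarrow>
     (\<forall>U Us. open_cover X U n Us \<longrightarrow>
        is_cat_equiv (FF U) (descent_cat FF resO resA n Us)
          (descent_functor_obj FF resO n U Us)
          (\<lambda>f. (descent_functor_obj FF resO n U Us (Dom (FF U) f),
                descent_functor_obj FF resO n U Us (Cod (FF U) f),
                (\<lambda>i\<in>{..<n}. resA (Us i) U f))))"

end

theory Submission
  imports Defs
begin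

text \<open>
  Both statements are proved by induction on the number of pieces: a cover \<open>U\<^sub>0, \<dots>, U\<^sub>n\<close>
  of \<open>U\<close> is regrouped into the two-piece cover \<open>V = U\<^sub>0 \<union> \<dots> \<union> U\<^sub>n\<^sub>-\<^sub>1\<close>, \<open>U\<^sub>n\<close>.

  \<open>sh(n)\<close> says exactly that objects and arrows separately form sheaves of sets. For a presheaf
  of sets, a compatible family on \<open>U\<^sub>0, \<dots>, U\<^sub>n\<close> is glued over \<open>V\<close> by induction, and the result
  agrees with the section over \<open>U\<^sub>n\<close> on \<open>V \<inter> U\<^sub>n\<close> because both restrict to the same sections
  on the cover \<open>U\<^sub>i \<inter> U\<^sub>n\<close> of \<open>V \<inter> U\<^sub>n\<close>; the two-piece condition then glues them over \<open>U\<close>.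

  For \<open>st(n)\<close>, the natural functor into the descent groupoid is an equivalence iff it is fully
  faithful and essentially surjective. Full faithfulness says that for objects \<open>x, y\<close> over \<open>U\<close>
  the arrows \<open>x|\<^sub>W \<rightarrow> y|\<^sub>W\<close> form a sheaf of sets on the opens \<open>W \<subseteq> U\<close>, which reduces to the
  case above. Essential surjectivity is effectiveness of descent: a descent datum \<open>(x, \<phi>)\<close> on
  \<open>U\<^sub>0, \<dots>, U\<^sub>n\<close> is glued over \<open>V\<close> to an object \<open>y\<close>, the isomorphisms \<open>y \<rightarrow> x\<^sub>i \<rightarrow> x\<^sub>n\<close> on
  \<open>U\<^sub>i \<inter> U\<^sub>n\<close> glue to one isomorphism \<open>\<psi>\<close> on \<open>V \<inter> U\<^sub>n\<close>, and \<open>(y, x\<^sub>n, \<psi>)\<close> is a descent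
  datum for the cover \<open>V, U\<^sub>n\<close>, which is effective by \<open>st(2)\<close>.
\<close>

section \<open>Categories, functors and groupoids\<close>

lemma cat_Dom_in_Obj [simp]: "is_category C \<Longrightarrow> f \<in> Arr C \<Longrightarrow> Dom C f \<in> Obj C"
  and cat_Cod_in_Obj [simp]: "is_category C \<Longrightarrow> f \<in> Arr C \<Longrightarrow> Cod C f \<in> Obj C"
  and cat_Ide_in_Arr [simp]: "is_category C \<Longrightarrow> a \<in> Obj C \<Longrightarrow> Ide C a \<in> Arr C"
  and cat_Dom_Ide [simp]: "is_category C \<Longrightarrow> a \<in> Obj C \<Longrightarrow> Dom C (Ide C a) = a"
  and cat_Cod_Ide [simp]: "is_category C \<Longrightarrow> a \<in> Obj C \<Longrightarrow> Cod C (Ide C a) = a"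
  unfolding is_category_def by blast+

lemma cat_Comp_in_Arr [simp]:
    "is_category C \<Longrightarrow> f \<in> Arr C \<Longrightarrow> g \<in> Arr C \<Longrightarrow> Cod C f = Dom C g \<Longrightarrow> Comp C g f \<in> Arr C"
  and cat_Dom_Comp [simp]:
    "is_category C \<Longrightarrow> f \<in> Arr C \<Longrightarrow> g \<in> Arr C \<Longrightarrow> Cod C f = Dom C g \<Longrightarrow> Dom C (Comp C g f) = Dom C f"
  and cat_Cod_Comp [simp]:
    "is_category C \<Longrightarrow> f \<in> Arr C \<Longrightarrow> g \<in> Arr C \<Longrightarrow> Cod C f = Dom C g \<Longrightarrow> Cod C (Comp C g f) = Cod C g"
  unfolding is_category_def by blast+

lemma cat_Comp_Ide_left [simp]: "is_category C \<Longrightarrow> f \<in> Arr C \<Longrightarrow> Cod C f = a \<Longrightarrow> Comp C (Ide C a) f = f"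
  and cat_Comp_Ide_right [simp]: "is_category C \<Longrightarrow> f \<in> Arr C \<Longrightarrow> Dom C f = a \<Longrightarrow> Comp C f (Ide C a) = f"
  unfolding is_category_def by blast+

lemma cat_Comp_assoc:
  "is_category C \<Longrightarrow> f \<in> Arr C \<Longrightarrow> g \<in> Arr C \<Longrightarrow> h \<in> Arr C \<Longrightarrow> Cod C f = Dom C g \<Longrightarrow> Cod C g = Dom C h \<Longrightarrow>
   Comp C (Comp C h g) f = Comp C h (Comp C g f)"
  unfolding is_category_def by metis

lemma is_inverseD:
  assumes "is_inverse C f g"
  shows "g \<in> Arr C" "Dom C g = Cod C f" "Cod C g = Dom C f"
    "Comp C g f = Ide C (Dom C f)" "Comp C f g = Ide C (Cod C f)"
  using assms unfolding is_inverse_def by auto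

lemma cat_inverse_cancel_left:
  assumes C: "is_category C" and e: "is_inverse C e e'" "e \<in> Arr C"
    and f: "f \<in> Arr C" "Cod C f = Dom C e"
  shows "Comp C e' (Comp C e f) = f"
proof -
  have "Comp C e' (Comp C e f) = Comp C (Comp C e' e) f"
    using assms by (simp add: cat_Comp_assoc is_inverseD(1-3))
  also have "\<dots> = f" using assms by (simp add: is_inverseD(4))
  finally show ?thesis .
qed

lemma cat_inverse_cancel_left':
  assumes C: "is_category C" and e: "is_inverse C e e'" "e \<in> Arr C"
    and f: "f \<in> Arr C" "Cod C f = Cod C e"
  shows "Comp C e (Comp C e' f) = f"
proof -
  have "Comp C e (Comp C e' f) = Comp C (Comp C e e') f"
    using assms by (simp add: cat_Comp_assoc is_inverseD(1-3))
  also have "\<dots> = f" using assms by (simp add: is_inverseD(5))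
  finally show ?thesis .
qed

lemma cat_inverse_cancel_right:
  assumes C: "is_category C" and e: "is_inverse C e e'" "e \<in> Arr C"
    and f: "f \<in> Arr C" "Dom C f = Cod C e"
  shows "Comp C (Comp C f e) e' = f"
proof -
  have "Comp C (Comp C f e) e' = Comp C f (Comp C e e')"
    using assms by (simp add: cat_Comp_assoc is_inverseD(1-3))
  also have "\<dots> = f" using assms by (simp add: is_inverseD(5))
  finally show ?thesis .
qed

lemma cat_iso_mono:
  assumes "is_category C" "is_inverse C e e'" "e \<in> Arr C" "f \<in> Arr C" "f' \<in> Arr C"
    "Cod C f = Dom C e" "Cod C f' = Dom C e" "Comp C e f = Comp C e f'"
  shows "f = f'"
  using cat_inverse_cancel_left[OF assms(1-4,6)] cat_inverse_cancel_left[OF assms(1-3,5,7)] assms(8)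
  by metis

lemma cat_iso_epi:
  assumes "is_category C" "is_inverse C e e'" "e \<in> Arr C" "f \<in> Arr C" "f' \<in> Arr C"
    "Dom C f = Cod C e" "Dom C f' = Cod C e" "Comp C f e = Comp C f' e"
  shows "f = f'"
  using cat_inverse_cancel_right[OF assms(1-4,6)] cat_inverse_cancel_right[OF assms(1-3,5,7)] assms(8)
  by metis

lemma cat_commuting_square_inverse:
  assumes C: "is_category C" and a: "is_inverse C a a'" and b: "is_inverse C b b'"
    and arr: "a \<in> Arr C" "b \<in> Arr C" "p \<in> Arr C" "q \<in> Arr C"
    and ty: "Cod C a = Dom C q" "Cod C p = Dom C b" "Dom C a = Dom C p" "Cod C q = Cod C b"
    and sq: "Comp C q a = Comp C b p"
  shows "Comp C p a' = Comp C b' q"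
proof -
  note a' = is_inverseD[OF a] and b' = is_inverseD[OF b]
  have "Comp C b' q = Comp C b' (Comp C (Comp C q a) a')"
    using cat_inverse_cancel_right[OF C a arr(1) arr(4)] ty by simp
  also have "\<dots> = Comp C b' (Comp C b (Comp C p a'))"
    using sq C arr a' ty by (simp add: cat_Comp_assoc)
  also have "\<dots> = Comp C p a'" using cat_inverse_cancel_left[OF C b arr(2)] C arr a' ty by simp
  finally show ?thesis by simp
qed

definition grpd_inv :: "('o, 'm, 'x) cat_scheme \<Rightarrow> 'm \<Rightarrow> 'm" where
  "grpd_inv C f = (SOME g. is_inverse C f g)"

lemma is_groupoid_is_category: "is_groupoid C \<Longrightarrow> is_category C"
  unfolding is_groupoid_def by simp

lemma grpd_inv_is_inverse: "is_groupoid C \<Longrightarrow> f \<in> Arr C \<Longrightarrow> is_inverse C f (grpd_inv C f)"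
  unfolding is_groupoid_def grpd_inv_def by (metis someI_ex)

lemma grpd_idempotent_eq_Ide:
  assumes C: "is_groupoid C" and f: "f \<in> Arr C" "Dom C f = Cod C f" and idem: "Comp C f f = f"
  shows "f = Ide C (Dom C f)"
proof -
  note inv = grpd_inv_is_inverse[OF C f(1)]
  have "f = Comp C (grpd_inv C f) (Comp C f f)"
    using cat_inverse_cancel_left[OF is_groupoid_is_category[OF C] inv f(1) f(1)] f(2) by simp
  also have "\<dots> = Ide C (Dom C f)" using idem is_inverseD(4)[OF inv] by simp
  finally show ?thesis .
qed

lemma functor_Obj: "is_functor C D Fo Fa \<Longrightarrow> a \<in> Obj C \<Longrightarrow> Fo a \<in> Obj D"
  and functor_Arr: "is_functor C D Fo Fa \<Longrightarrow> f \<in> Arr C \<Longrightarrow> Fa f \<in> Arr D"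
  and functor_Dom: "is_functor C D Fo Fa \<Longrightarrow> f \<in> Arr C \<Longrightarrow> Dom D (Fa f) = Fo (Dom C f)"
  and functor_Cod: "is_functor C D Fo Fa \<Longrightarrow> f \<in> Arr C \<Longrightarrow> Cod D (Fa f) = Fo (Cod C f)"
  and functor_Ide: "is_functor C D Fo Fa \<Longrightarrow> a \<in> Obj C \<Longrightarrow> Fa (Ide C a) = Ide D (Fo a)"
  and functor_Comp: "is_functor C D Fo Fa \<Longrightarrow> f \<in> Arr C \<Longrightarrow> g \<in> Arr C \<Longrightarrow> Cod C f = Dom C g \<Longrightarrow>
    Fa (Comp C g f) = Comp D (Fa g) (Fa f)"
  unfolding is_functor_def by blast+

lemma functor_preserves_inverse:
  assumes F: "is_functor C D Fo Fa" and C: "is_category C" and f: "f \<in> Arr C" and inv: "is_inverse C f g"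
  shows "is_inverse D (Fa f) (Fa g)"
proof -
  note g = is_inverseD[OF inv]
  have "Comp D (Fa g) (Fa f) = Fa (Comp C g f)" using functor_Comp[OF F f g(1)] g by simp
  also have "\<dots> = Ide D (Dom D (Fa f))" using g functor_Ide[OF F] functor_Dom[OF F f] C f by simp
  finally have left: "Comp D (Fa g) (Fa f) = Ide D (Dom D (Fa f))" .
  have "Comp D (Fa f) (Fa g) = Fa (Comp C f g)" using functor_Comp[OF F g(1) f] g by simp
  also have "\<dots> = Ide D (Cod D (Fa f))" using g functor_Ide[OF F] functor_Cod[OF F f] C f by simp
  finally have right: "Comp D (Fa f) (Fa g) = Ide D (Cod D (Fa f))" .
  show ?thesis unfolding is_inverse_def
    using left right functor_Arr[OF F g(1)] functor_Dom[OF F g(1)] functor_Cod[OF F g(1)]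
      functor_Dom[OF F f] functor_Cod[OF F f] g by simp
qed

lemma is_cat_isoI_bij:
  assumes C: "is_category C" and F: "is_functor C D Fo Fa"
    and bij_Obj: "bij_betw Fo (Obj C) (Obj D)" and bij_Arr: "bij_betw Fa (Arr C) (Arr D)"
  shows "is_cat_iso C D Fo Fa"
proof -
  define Go where "Go = inv_into (Obj C) Fo"
  define Ga where "Ga = inv_into (Arr C) Fa"
  have Go: "b \<in> Obj D \<Longrightarrow> Go b \<in> Obj C \<and> Fo (Go b) = b" for b
    unfolding Go_def by (metis bij_Obj bij_betw_def bij_betw_inv_into_right inv_into_into)
  have Go_Fo: "a \<in> Obj C \<Longrightarrow> Go (Fo a) = a" for a
    unfolding Go_def by (meson bij_betw_inv_into_left bij_Obj)
  have Ga: "g \<in> Arr D \<Longrightarrow> Ga g \<in> Arr C \<and> Fa (Ga g) = g" for g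
    unfolding Ga_def by (metis bij_Arr bij_betw_def bij_betw_inv_into_right inv_into_into)
  have Ga_Fa: "f \<in> Arr C \<Longrightarrow> Ga (Fa f) = f" for f
    unfolding Ga_def by (meson bij_betw_inv_into_left bij_Arr)
  have Ga_Dom: "Dom C (Ga g) = Go (Dom D g)" if "g \<in> Arr D" for g
    using functor_Dom[OF F, of "Ga g"] Ga[OF that] Go_Fo[of "Dom C (Ga g)"] C by simp
  have Ga_Cod: "Cod C (Ga g) = Go (Cod D g)" if "g \<in> Arr D" for g
    using functor_Cod[OF F, of "Ga g"] Ga[OF that] Go_Fo[of "Cod C (Ga g)"] C by simp
  have Ga_Ide: "Ga (Ide D b) = Ide C (Go b)" if "b \<in> Obj D" for b
    using functor_Ide[OF F, of "Go b"] Go[OF that] Ga_Fa[of "Ide C (Go b)"] C by simp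
  have Ga_Comp: "Ga (Comp D h g) = Comp C (Ga h) (Ga g)"
    if g: "g \<in> Arr D" and h: "h \<in> Arr D" and gh: "Cod D g = Dom D h" for g h
  proof -
    have comp: "Cod C (Ga g) = Dom C (Ga h)" using Ga_Cod[OF g] Ga_Dom[OF h] gh by simp
    have "Comp D h g = Fa (Comp C (Ga h) (Ga g))"
      using functor_Comp[OF F _ _ comp] Ga[OF g] Ga[OF h] by simp
    thus ?thesis using Ga_Fa cat_Comp_in_Arr[OF C _ _ comp] Ga[OF g] Ga[OF h] by simp
  qed
  have "is_functor D C Go Ga"
    unfolding is_functor_def using Go Ga Ga_Dom Ga_Cod Ga_Ide Ga_Comp by blast
  thus ?thesis unfolding is_cat_iso_def using F Go Go_Fo Ga Ga_Fa by blast
qed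

lemma is_cat_iso_iff_bij:
  assumes "is_category C" "is_functor C D Fo Fa"
  shows "is_cat_iso C D Fo Fa \<longleftrightarrow> bij_betw Fo (Obj C) (Obj D) \<and> bij_betw Fa (Arr C) (Arr D)"
proof
  assume "is_cat_iso C D Fo Fa"
  then obtain Go Ga where G: "is_functor D C Go Ga"
    and "\<forall>a\<in>Obj C. Go (Fo a) = a" "\<forall>f\<in>Arr C. Ga (Fa f) = f"
        "\<forall>b\<in>Obj D. Fo (Go b) = b" "\<forall>g\<in>Arr D. Fa (Ga g) = g"
    unfolding is_cat_iso_def by blast
  then show "bij_betw Fo (Obj C) (Obj D) \<and> bij_betw Fa (Arr C) (Arr D)"
    using functor_Obj[OF assms(2)] functor_Arr[OF assms(2)] functor_Obj[OF G] functor_Arr[OF G]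
    by (auto intro!: bij_betw_byWitness)
qed (use is_cat_isoI_bij assms in blast)

definition faithful :: "('o, 'm, 'x) cat_scheme \<Rightarrow> ('m \<Rightarrow> 'n) \<Rightarrow> bool" where
  "faithful C Fa \<longleftrightarrow> (\<forall>f\<in>Arr C. \<forall>f'\<in>Arr C.
     Dom C f = Dom C f' \<longrightarrow> Cod C f = Cod C f' \<longrightarrow> Fa f = Fa f' \<longrightarrow> f = f')"

definition full ::
  "('o, 'm, 'x) cat_scheme \<Rightarrow> ('p, 'n, 'y) cat_scheme \<Rightarrow> ('o \<Rightarrow> 'p) \<Rightarrow> ('m \<Rightarrow> 'n) \<Rightarrow> bool" where
  "full C D Fo Fa \<longleftrightarrow> (\<forall>a\<in>Obj C. \<forall>a'\<in>Obj C. \<forall>g\<in>Arr D. Dom D g = Fo a \<longrightarrow> Cod D g = Fo a' \<longrightarrow>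
     (\<exists>f\<in>Arr C. Dom C f = a \<and> Cod C f = a' \<and> Fa f = g))"

definition ess_surj :: "('o, 'm, 'x) cat_scheme \<Rightarrow> ('p, 'n, 'y) cat_scheme \<Rightarrow> ('o \<Rightarrow> 'p) \<Rightarrow> bool" where
  "ess_surj C D Fo \<longleftrightarrow> (\<forall>b\<in>Obj D. \<exists>a\<in>Obj C. \<exists>e\<in>Arr D. Dom D e = Fo a \<and> Cod D e = b)"

lemma faithfulD:
  "faithful C Fa \<Longrightarrow> f \<in> Arr C \<Longrightarrow> f' \<in> Arr C \<Longrightarrow> Dom C f = Dom C f' \<Longrightarrow> Cod C f = Cod C f' \<Longrightarrow>
   Fa f = Fa f' \<Longrightarrow> f = f'"
  unfolding faithful_def by blast

lemma faithful_comp_imp_faithful: "faithful C (Ga \<circ> Fa) \<Longrightarrow> faithful C Fa"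
  unfolding faithful_def by simp

lemma faithful_if_nat_iso_from_id:
  assumes C: "is_category C" and eta: "is_nat_iso C C id id Go Ga eta"
  shows "faithful C Ga"
  unfolding faithful_def
proof (intro ballI impI)
  fix f f' assume f: "f \<in> Arr C" and f': "f' \<in> Arr C"
    and dom: "Dom C f = Dom C f'" and cod: "Cod C f = Cod C f'" and eq: "Ga f = Ga f'"
  have "Cod C f \<in> Obj C" using C f by simp
  then have eta_f: "eta (Cod C f) \<in> Arr C" "Dom C (eta (Cod C f)) = Cod C f"
    and "\<exists>e'. is_inverse C (eta (Cod C f)) e'"
    using eta unfolding is_nat_iso_def by simp_all
  then obtain e' where e': "is_inverse C (eta (Cod C f)) e'" by blast
  have nat: "Comp C (eta (Cod C g)) g = Comp C (Ga g) (eta (Dom C g))" if "g \<in> Arr C" for g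
    using eta that unfolding is_nat_iso_def by simp
  have "Comp C (eta (Cod C f)) f = Comp C (eta (Cod C f)) f'"
    using nat[OF f] nat[OF f'] dom cod eq by simp
  then show "f = f'" by (rule cat_iso_mono[OF C e' eta_f(1) f f', rotated 2]) (use eta_f(2) cod in simp_all)
qed

lemma faithful_if_nat_iso_to_id:
  assumes C: "is_category C" and eps: "is_nat_iso C C Go Ga id id eps"
  shows "faithful C Ga"
  unfolding faithful_def
proof (intro ballI impI)
  fix f f' assume f: "f \<in> Arr C" and f': "f' \<in> Arr C"
    and dom: "Dom C f = Dom C f'" and cod: "Cod C f = Cod C f'" and eq: "Ga f = Ga f'"
  have "Dom C f \<in> Obj C" using C f by simp
  then have eps_f: "eps (Dom C f) \<in> Arr C" "Cod C (eps (Dom C f)) = Dom C f"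
    and "\<exists>e'. is_inverse C (eps (Dom C f)) e'"
    using eps unfolding is_nat_iso_def by simp_all
  then obtain e' where e': "is_inverse C (eps (Dom C f)) e'" by blast
  have nat: "Comp C (eps (Cod C g)) (Ga g) = Comp C g (eps (Dom C g))" if "g \<in> Arr C" for g
    using eps that unfolding is_nat_iso_def by simp
  have "Comp C f (eps (Dom C f)) = Comp C f' (eps (Dom C f))"
    using nat[OF f] nat[OF f'] dom cod eq by simp
  then show "f = f'" by (rule cat_iso_epi[OF C e' eps_f(1) f f', rotated 2]) (use eps_f(2) dom in simp_all)
qed

lemma cat_equiv_full:
  assumes C: "is_category C" and D: "is_category D" and E: "is_cat_equiv C D Fo Fa"
  shows "full C D Fo Fa"
  unfolding full_def
proof (intro ballI impI)
  obtain Go Ga eta eps where F: "is_functor C D Fo Fa" and G: "is_functor D C Go Ga"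
    and eta: "is_nat_iso C C id id (Go \<circ> Fo) (Ga \<circ> Fa) eta"
    and eps: "is_nat_iso D D (Fo \<circ> Go) (Fa \<circ> Ga) id id eps"
    using E unfolding is_cat_equiv_def by blast
  have G_faithful: "faithful D Ga"
    using faithful_comp_imp_faithful faithful_if_nat_iso_to_id[OF D eps] by blast
  have eta_a: "eta a \<in> Arr C \<and> Dom C (eta a) = a \<and> Cod C (eta a) = Go (Fo a) \<and> (\<exists>e'. is_inverse C (eta a) e')"
    if "a \<in> Obj C" for a
    using eta that unfolding is_nat_iso_def by simp
  fix a a' g assume a: "a \<in> Obj C" and a': "a' \<in> Obj C" and g: "g \<in> Arr D"
    and g_dom: "Dom D g = Fo a" and g_cod: "Cod D g = Fo a'"
  obtain e where e: "is_inverse C (eta a) e" using eta_a[OF a] by blast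
  obtain e' where e': "is_inverse C (eta a') e'" using eta_a[OF a'] by blast
  note e'_arr = is_inverseD(1-3)[OF e']
  have Gg: "Ga g \<in> Arr C" "Dom C (Ga g) = Go (Fo a)" "Cod C (Ga g) = Go (Fo a')"
    using functor_Arr[OF G g] functor_Dom[OF G g] functor_Cod[OF G g] g_dom g_cod by auto
  define k where "k = Comp C (Ga g) (eta a)"
  have k: "k \<in> Arr C" "Dom C k = a" "Cod C k = Go (Fo a')"
    unfolding k_def using C Gg eta_a[OF a] by auto
  define f where "f = Comp C e' k"
  have f: "f \<in> Arr C" "Dom C f = a" "Cod C f = a'"
    unfolding f_def using C k e'_arr eta_a[OF a'] by auto
  have Ff: "Fa f \<in> Arr D" "Dom D (Fa f) = Fo a" "Cod D (Fa f) = Fo a'"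
    using functor_Arr[OF F f(1)] functor_Dom[OF F f(1)] functor_Cod[OF F f(1)] f by auto
  have "Comp C (eta (Cod C f)) f = Comp C (Ga (Fa f)) (eta (Dom C f))"
    using eta f(1) unfolding is_nat_iso_def by simp
  then have "Comp C (Ga (Fa f)) (eta a) = Comp C (eta a') f" using f by simp
  also have "\<dots> = k"
    unfolding f_def using cat_inverse_cancel_left'[OF C e' _ k(1)] k eta_a[OF a'] by simp
  finally have "Comp C (Ga (Fa f)) (eta a) = Comp C (Ga g) (eta a)" unfolding k_def .
  then have "Ga (Fa f) = Ga g"
    using cat_iso_epi[OF C e _ functor_Arr[OF G Ff(1)] Gg(1)] functor_Dom[OF G Ff(1)] Ff Gg eta_a[OF a]
    by simp
  then have "Fa f = g" using faithfulD[OF G_faithful Ff(1) g] Ff g_dom g_cod by simp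
  then show "\<exists>f\<in>Arr C. Dom C f = a \<and> Cod C f = a' \<and> Fa f = g" using f by blast
qed

lemma cat_equiv_imp_faithful_full_ess_surj:
  assumes C: "is_category C" and D: "is_category D" and E: "is_cat_equiv C D Fo Fa"
  shows "faithful C Fa \<and> full C D Fo Fa \<and> ess_surj C D Fo"
proof -
  obtain Go Ga eta eps where G: "is_functor D C Go Ga"
    and eta: "is_nat_iso C C id id (Go \<circ> Fo) (Ga \<circ> Fa) eta"
    and eps: "is_nat_iso D D (Fo \<circ> Go) (Fa \<circ> Ga) id id eps"
    using E unfolding is_cat_equiv_def by blast
  have "faithful C Fa"
    using faithful_comp_imp_faithful faithful_if_nat_iso_from_id[OF C eta] by blast
  moreover have "ess_surj C D Fo"
    unfolding ess_surj_def
  proof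
    fix b assume "b \<in> Obj D"
    then show "\<exists>a\<in>Obj C. \<exists>e\<in>Arr D. Dom D e = Fo a \<and> Cod D e = b"
      using functor_Obj[OF G] eps unfolding is_nat_iso_def by auto
  qed
  ultimately show ?thesis using cat_equiv_full[OF C D E] by blast
qed

context
  fixes D :: "('p, 'n, 'y) cat_scheme" and E E' :: "'p \<Rightarrow> 'n" and T :: "'n \<Rightarrow> 'n"
  assumes D: "is_category D"
    and E_iso: "\<forall>b\<in>Obj D. E b \<in> Arr D \<and> Cod D (E b) = b \<and> is_inverse D (E b) (E' b)"
    and T: "\<And>g. T g = Comp D (E' (Cod D g)) (Comp D g (E (Dom D g)))"
begin

lemma conjugate_family_arr:
  assumes "b \<in> Obj D"
  shows "E b \<in> Arr D" "Cod D (E b) = b" "E' b \<in> Arr D" "Dom D (E' b) = b" "Cod D (E' b) = Dom D (E b)"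
  using E_iso[rule_format, OF assms] is_inverseD(1-3)[of D "E b" "E' b"] by auto

lemma conjugate_in_Arr:
  assumes "g \<in> Arr D"
  shows "T g \<in> Arr D" "Dom D (T g) = Dom D (E (Dom D g))" "Cod D (T g) = Dom D (E (Cod D g))"
  unfolding T using assms D conjugate_family_arr[of "Dom D g"] conjugate_family_arr[of "Cod D g"] by auto

lemma conjugate_commutes:
  assumes g: "g \<in> Arr D"
  shows "Comp D (E (Cod D g)) (T g) = Comp D g (E (Dom D g))"
  unfolding T using cat_inverse_cancel_left'[OF D _ _ cat_Comp_in_Arr[OF D _ g]] E_iso[rule_format] D g
    conjugate_family_arr[of "Dom D g"] by simp

lemma conjugate_commutes':
  assumes g: "g \<in> Arr D"
  shows "Comp D (T g) (E' (Dom D g)) = Comp D (E' (Cod D g)) g"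
proof -
  have "Comp D (T g) (E' (Dom D g)) = Comp D (E' (Cod D g)) (Comp D (Comp D g (E (Dom D g))) (E' (Dom D g)))"
    unfolding T using D g conjugate_family_arr[of "Dom D g"] conjugate_family_arr[of "Cod D g"] by (simp add: cat_Comp_assoc)
  also have "\<dots> = Comp D (E' (Cod D g)) g"
    using cat_inverse_cancel_right[OF D _ _ g] E_iso[rule_format] D g by simp
  finally show ?thesis .
qed

lemma conjugate_Ide: "b \<in> Obj D \<Longrightarrow> T (Ide D b) = Ide D (Dom D (E b))"
  unfolding T using D conjugate_family_arr[of b] E_iso[rule_format] is_inverseD(4) by fastforce

lemma conjugate_Comp:
  assumes g: "g \<in> Arr D" and h: "h \<in> Arr D" and gh: "Cod D g = Dom D h"
  shows "T (Comp D h g) = Comp D (T h) (T g)"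
proof -
  note Eg = conjugate_family_arr[of "Dom D g"] conjugate_family_arr[of "Cod D g"] and Eh = conjugate_family_arr[of "Cod D h"]
  have "Comp D (E (Cod D h)) (Comp D (T h) (T g)) = Comp D (Comp D h (E (Cod D g))) (T g)"
    using conjugate_commutes[OF h] conjugate_in_Arr[OF h] conjugate_in_Arr[OF g] D g h gh Eh
    by (metis cat_Comp_assoc cat_Cod_in_Obj)
  also have "\<dots> = Comp D h (Comp D g (E (Dom D g)))"
    using conjugate_commutes[OF g] conjugate_in_Arr[OF g] D g h gh Eg by (simp add: cat_Comp_assoc)
  also have "\<dots> = Comp D (E (Cod D h)) (T (Comp D h g))"
    using conjugate_commutes[of "Comp D h g"] D g h gh Eg by (simp add: cat_Comp_assoc)
  finally have eq: "Comp D (E (Cod D h)) (Comp D (T h) (T g)) = Comp D (E (Cod D h)) (T (Comp D h g))" .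
  show ?thesis
    by (rule cat_iso_mono[OF D _ _ _ _ _ _ eq[symmetric]])
      (use E_iso[rule_format, of "Cod D h"] conjugate_in_Arr[OF g] conjugate_in_Arr[OF h] conjugate_in_Arr[of "Comp D h g"] D g h gh in auto)
qed

end

lemma faithful_full_lift_functor:
  assumes C: "is_category C" and D: "is_category D" and F: "is_functor C D Fo Fa"
    and faithful: "faithful C Fa" and full: "full C D Fo Fa"
    and Go: "\<And>b. b \<in> Obj D \<Longrightarrow> Go b \<in> Obj C"
    and T: "\<And>g. g \<in> Arr D \<Longrightarrow> T g \<in> Arr D \<and> Dom D (T g) = Fo (Go (Dom D g)) \<and> Cod D (T g) = Fo (Go (Cod D g))"
    and T_Ide: "\<And>b. b \<in> Obj D \<Longrightarrow> T (Ide D b) = Ide D (Fo (Go b))"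
    and T_Comp: "\<And>g h. g \<in> Arr D \<Longrightarrow> h \<in> Arr D \<Longrightarrow> Cod D g = Dom D h \<Longrightarrow> T (Comp D h g) = Comp D (T h) (T g)"
  obtains Ga where "is_functor D C Go Ga" "\<And>g. g \<in> Arr D \<Longrightarrow> Fa (Ga g) = T g"
proof
  define Ga where "Ga g = (SOME f. f \<in> Arr C \<and> Dom C f = Go (Dom D g) \<and> Cod C f = Go (Cod D g) \<and> Fa f = T g)" for g
  have Ga: "Ga g \<in> Arr C \<and> Dom C (Ga g) = Go (Dom D g) \<and> Cod C (Ga g) = Go (Cod D g) \<and> Fa (Ga g) = T g"
    if g: "g \<in> Arr D" for g
  proof -
    have "\<exists>f. f \<in> Arr C \<and> Dom C f = Go (Dom D g) \<and> Cod C f = Go (Cod D g) \<and> Fa f = T g"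
      using full Go T[OF g] D g unfolding full_def by (meson cat_Cod_in_Obj cat_Dom_in_Obj)
    then show ?thesis unfolding Ga_def by (rule someI_ex)
  qed
  have Ga_Ide: "Ga (Ide D b) = Ide C (Go b)" if b: "b \<in> Obj D" for b
  proof (rule faithfulD[OF faithful])
    show "Fa (Ga (Ide D b)) = Fa (Ide C (Go b))"
      using Ga[of "Ide D b"] T_Ide[OF b] functor_Ide[OF F] Go[OF b] D b by simp
  qed (use Ga[of "Ide D b"] Go[OF b] C D b in simp_all)
  have Ga_Comp: "Ga (Comp D h g) = Comp C (Ga h) (Ga g)"
    if g: "g \<in> Arr D" and h: "h \<in> Arr D" and gh: "Cod D g = Dom D h" for g h
  proof (rule faithfulD[OF faithful])
    have comp: "Cod C (Ga g) = Dom C (Ga h)" using Ga[OF g] Ga[OF h] gh by simp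
    show "Fa (Ga (Comp D h g)) = Fa (Comp C (Ga h) (Ga g))"
      using Ga[OF g] Ga[OF h] Ga[of "Comp D h g"] functor_Comp[OF F _ _ comp] T_Comp[OF g h gh] D g h gh
      by simp
  qed (use Ga[OF g] Ga[OF h] Ga[of "Comp D h g"] C D g h gh in auto)
  show "is_functor D C Go Ga"
    unfolding is_functor_def using Go Ga Ga_Ide Ga_Comp by blast
  show "Fa (Ga g) = T g" if "g \<in> Arr D" for g using Ga[OF that] by blast
qed

lemma faithful_full_lift_nat_iso:
  assumes C: "is_groupoid C" and F: "is_functor C D Fo Fa" and G: "is_functor D C Go Ga"
    and faithful: "faithful C Fa" and full: "full C D Fo Fa"
    and E': "\<And>b. b \<in> Obj D \<Longrightarrow> E' b \<in> Arr D \<and> Dom D (E' b) = b \<and> Cod D (E' b) = Fo (Go b)"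
    and E'_nat: "\<And>g. g \<in> Arr D \<Longrightarrow> Comp D (Fa (Ga g)) (E' (Dom D g)) = Comp D (E' (Cod D g)) g"
  shows "\<exists>eta. is_nat_iso C C id id (Go \<circ> Fo) (Ga \<circ> Fa) eta"
proof -
  have Cc: "is_category C" using C by (rule is_groupoid_is_category)
  define eta where "eta a = (SOME f. f \<in> Arr C \<and> Dom C f = a \<and> Cod C f = Go (Fo a) \<and> Fa f = E' (Fo a))" for a
  have eta: "eta a \<in> Arr C \<and> Dom C (eta a) = a \<and> Cod C (eta a) = Go (Fo a) \<and> Fa (eta a) = E' (Fo a)"
    if a: "a \<in> Obj C" for a
  proof -
    have "\<exists>f. f \<in> Arr C \<and> Dom C f = a \<and> Cod C f = Go (Fo a) \<and> Fa f = E' (Fo a)"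
      using full a functor_Obj[OF G] E' functor_Obj[OF F a] unfolding full_def by blast
    then show ?thesis unfolding eta_def by (rule someI_ex)
  qed
  have eta_nat: "Comp C (eta (Cod C f)) f = Comp C (Ga (Fa f)) (eta (Dom C f))" if f: "f \<in> Arr C" for f
  proof (rule faithfulD[OF faithful])
    have Ff: "Fa f \<in> Arr D" "Dom D (Fa f) = Fo (Dom C f)" "Cod D (Fa f) = Fo (Cod C f)"
      using functor_Arr[OF F f] functor_Dom[OF F f] functor_Cod[OF F f] .
    show "Fa (Comp C (eta (Cod C f)) f) = Fa (Comp C (Ga (Fa f)) (eta (Dom C f)))"
      using functor_Comp[OF F] eta Cc f functor_Arr[OF G Ff(1)] functor_Dom[OF G Ff(1)] E'_nat[OF Ff(1)] Ff by simp
  qed (use Cc f eta functor_Arr[OF G] functor_Dom[OF G] functor_Cod[OF G] functor_Arr[OF F]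
      functor_Dom[OF F] functor_Cod[OF F] in auto)
  have "is_nat_iso C C id id (Go \<circ> Fo) (Ga \<circ> Fa) eta"
    unfolding is_nat_iso_def using eta eta_nat grpd_inv_is_inverse[OF C] by auto
  then show ?thesis by blast
qed

lemma cat_equiv_if_faithful_full_ess_surj:
  assumes C: "is_groupoid C" and D: "is_groupoid D" and F: "is_functor C D Fo Fa"
    and faithful: "faithful C Fa" and full: "full C D Fo Fa" and ess_surj: "ess_surj C D Fo"
  shows "is_cat_equiv C D Fo Fa"
proof -
  have Cc: "is_category C" and Dc: "is_category D" using C D is_groupoid_is_category by auto
  have "\<forall>b\<in>Obj D. \<exists>a e. a \<in> Obj C \<and> e \<in> Arr D \<and> Dom D e = Fo a \<and> Cod D e = b"
    using ess_surj unfolding ess_surj_def by blast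
  then obtain Go E where Go: "\<And>b. b \<in> Obj D \<Longrightarrow> Go b \<in> Obj C"
    and E: "\<And>b. b \<in> Obj D \<Longrightarrow> E b \<in> Arr D \<and> Dom D (E b) = Fo (Go b) \<and> Cod D (E b) = b"
    by metis
  define E' where "E' b = grpd_inv D (E b)" for b
  have E_inv: "\<forall>b\<in>Obj D. E b \<in> Arr D \<and> Cod D (E b) = b \<and> is_inverse D (E b) (E' b)"
    unfolding E'_def using E grpd_inv_is_inverse[OF D] by blast
  define T where "T g = Comp D (E' (Cod D g)) (Comp D g (E (Dom D g)))" for g
  note T_in_Arr = conjugate_in_Arr[OF Dc E_inv T_def]
    and T_commutes = conjugate_commutes[OF Dc E_inv T_def]
    and T_commutes' = conjugate_commutes'[OF Dc E_inv T_def]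
  have T: "T g \<in> Arr D \<and> Dom D (T g) = Fo (Go (Dom D g)) \<and> Cod D (T g) = Fo (Go (Cod D g))"
    if "g \<in> Arr D" for g
    using T_in_Arr[OF that] E Dc that by simp
  have T_Ide: "T (Ide D b) = Ide D (Fo (Go b))" if "b \<in> Obj D" for b
    using conjugate_Ide[OF Dc E_inv T_def that] E[OF that] by simp
  obtain Ga where G: "is_functor D C Go Ga" and Fa_Ga: "\<And>g. g \<in> Arr D \<Longrightarrow> Fa (Ga g) = T g"
    using faithful_full_lift_functor[OF Cc Dc F faithful full Go T T_Ide conjugate_Comp[OF Dc E_inv T_def]] by blast
  have E': "E' b \<in> Arr D \<and> Dom D (E' b) = b \<and> Cod D (E' b) = Fo (Go b)" if "b \<in> Obj D" for b
    using conjugate_family_arr[OF Dc E_inv T_def that] E[OF that] by simp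
  have E'_nat: "Comp D (Fa (Ga g)) (E' (Dom D g)) = Comp D (E' (Cod D g)) g" if "g \<in> Arr D" for g
    using Fa_Ga[OF that] T_commutes'[OF that] by simp
  obtain eta where "is_nat_iso C C id id (Go \<circ> Fo) (Ga \<circ> Fa) eta"
    using faithful_full_lift_nat_iso[OF C F G faithful full E' E'_nat] by blast
  moreover have "is_nat_iso D D (Fo \<circ> Go) (Fa \<circ> Ga) id id E"
    unfolding is_nat_iso_def using E E_inv Fa_Ga T_commutes by auto
  ultimately show ?thesis unfolding is_cat_equiv_def using F G by blast
qed

section \<open>The sheaf condition for set-valued presheaves\<close>

text \<open>\<open>Op\<close> singles out the admissible opens (for instance the opens inside a fixed set), which
  must be closed under binary unions and intersections; \<open>P W\<close> is the set of sections over \<open>W\<close>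
  and \<open>r V W\<close> restricts them to \<open>V \<subseteq> W\<close>.\<close>

definition set_presheaf ::
  "('s set \<Rightarrow> bool) \<Rightarrow> ('s set \<Rightarrow> 'e set) \<Rightarrow> ('s set \<Rightarrow> 's set \<Rightarrow> 'e \<Rightarrow> 'e) \<Rightarrow> bool" where
  "set_presheaf Op P r \<longleftrightarrow>
     (\<forall>W. Op W \<longrightarrow> (\<forall>x\<in>P W. r W W x = x)) \<and>
     (\<forall>V W. Op V \<longrightarrow> Op W \<longrightarrow> V \<subseteq> W \<longrightarrow> (\<forall>x\<in>P W. r V W x \<in> P V)) \<and>
     (\<forall>V W Z. Op V \<longrightarrow> Op W \<longrightarrow> Op Z \<longrightarrow> V \<subseteq> W \<longrightarrow> W \<subseteq> Z \<longrightarrow> (\<forall>x\<in>P Z. r V W (r W Z x) = r V Z x)) \<and>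
     (\<forall>A B. Op A \<longrightarrow> Op B \<longrightarrow> Op (A \<inter> B) \<and> Op (A \<union> B))"

definition sheaf_cond_for ::
  "('s set \<Rightarrow> 'e set) \<Rightarrow> ('s set \<Rightarrow> 's set \<Rightarrow> 'e \<Rightarrow> 'e) \<Rightarrow> 's set \<Rightarrow> nat \<Rightarrow> (nat \<Rightarrow> 's set) \<Rightarrow> bool" where
  "sheaf_cond_for P r U n Us \<longleftrightarrow>
     (\<forall>x\<in>P U. \<forall>y\<in>P U. (\<forall>i<n. r (Us i) U x = r (Us i) U y) \<longrightarrow> x = y) \<and>
     (\<forall>s. (\<forall>i<n. s i \<in> P (Us i)) \<longrightarrow>
        (\<forall>i<n. \<forall>j<n. r (Us i \<inter> Us j) (Us i) (s i) = r (Us i \<inter> Us j) (Us j) (s j)) \<longrightarrow>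
        (\<exists>x\<in>P U. \<forall>i<n. r (Us i) U x = s i))"

definition sheaf_cond ::
  "('s set \<Rightarrow> bool) \<Rightarrow> ('s set \<Rightarrow> 'e set) \<Rightarrow> ('s set \<Rightarrow> 's set \<Rightarrow> 'e \<Rightarrow> 'e) \<Rightarrow> nat \<Rightarrow> bool" where
  "sheaf_cond Op P r n \<longleftrightarrow>
     (\<forall>U Us. Op U \<longrightarrow> (\<forall>i<n. Op (Us i)) \<longrightarrow> (\<Union>i<n. Us i) = U \<longrightarrow> sheaf_cond_for P r U n Us)"

definition compatible_families ::
  "('s set \<Rightarrow> 'e set) \<Rightarrow> ('s set \<Rightarrow> 's set \<Rightarrow> 'e \<Rightarrow> 'e) \<Rightarrow> nat \<Rightarrow> (nat \<Rightarrow> 's set) \<Rightarrow> (nat \<Rightarrow> 'e) set" where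
  "compatible_families P r n Us = {s \<in> PiE {..<n} (\<lambda>i. P (Us i)).
     \<forall>i<n. \<forall>j<n. r (Us i \<inter> Us j) (Us i) (s i) = r (Us i \<inter> Us j) (Us j) (s j)}"

lemma sheaf_cond_for_separated:
  "sheaf_cond_for P r U n Us \<Longrightarrow> x \<in> P U \<Longrightarrow> y \<in> P U \<Longrightarrow> (\<And>i. i < n \<Longrightarrow> r (Us i) U x = r (Us i) U y) \<Longrightarrow>
   x = y"
  unfolding sheaf_cond_for_def by blast

lemma sheaf_cond_for_glue:
  "sheaf_cond_for P r U n Us \<Longrightarrow> (\<And>i. i < n \<Longrightarrow> s i \<in> P (Us i)) \<Longrightarrow>
   (\<And>i j. i < n \<Longrightarrow> j < n \<Longrightarrow> r (Us i \<inter> Us j) (Us i) (s i) = r (Us i \<inter> Us j) (Us j) (s j)) \<Longrightarrow>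
   \<exists>x\<in>P U. \<forall>i<n. r (Us i) U x = s i"
  unfolding sheaf_cond_for_def by blast

lemma sheaf_condD:
  "sheaf_cond Op P r n \<Longrightarrow> Op U \<Longrightarrow> (\<And>i. i < n \<Longrightarrow> Op (Us i)) \<Longrightarrow> (\<Union>i<n. Us i) = U \<Longrightarrow>
   sheaf_cond_for P r U n Us"
  unfolding sheaf_cond_def by blast

lemma sheaf_cond_for_cong:
  "P U = P' U \<Longrightarrow> (\<And>i. i < n \<Longrightarrow> P (Us i) = P' (Us i)) \<Longrightarrow> sheaf_cond_for P r U n Us \<longleftrightarrow> sheaf_cond_for P' r U n Us"
  unfolding sheaf_cond_for_def by simp

definition fam2 :: "'b \<Rightarrow> 'b \<Rightarrow> nat \<Rightarrow> 'b" where
  "fam2 a b i = (if i = 0 then a else b)"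

lemma fam2_simps [simp]: "fam2 a b 0 = a" "fam2 a b 1 = b" "fam2 a b (Suc 0) = b"
  by (simp_all add: fam2_def)

lemma all_less_2: "(\<forall>i<(2::nat). P i) \<longleftrightarrow> P 0 \<and> P 1"
  by (auto simp: numeral_2_eq_2 less_Suc_eq)

lemma UN_fam2: "(\<Union>i<2. fam2 A B i) = A \<union> B"
  by (auto simp: fam2_def numeral_2_eq_2 less_Suc_eq)

lemma UN_lessThan_Suc_split: "(\<Union>i<Suc n. Us i) = (\<Union>i<n. Us i) \<union> Us n"
  by (simp add: lessThan_Suc Un_commute)

lemma restrict_eq_iff: "restrict f A = restrict g A \<longleftrightarrow> (\<forall>x\<in>A. f x = g x)"
  by (metis restrict_apply' restrict_ext)

context
  fixes Op :: "'s set \<Rightarrow> bool" and P :: "'s set \<Rightarrow> 'e set" and r :: "'s set \<Rightarrow> 's set \<Rightarrow> 'e \<Rightarrow> 'e"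
  assumes psh: "set_presheaf Op P r"
begin

lemma presheaf_restrict_in: "Op V \<Longrightarrow> Op W \<Longrightarrow> V \<subseteq> W \<Longrightarrow> x \<in> P W \<Longrightarrow> r V W x \<in> P V"
  and presheaf_restrict_trans:
    "Op V \<Longrightarrow> Op W \<Longrightarrow> Op Z \<Longrightarrow> V \<subseteq> W \<Longrightarrow> W \<subseteq> Z \<Longrightarrow> x \<in> P Z \<Longrightarrow> r V W (r W Z x) = r V Z x"
  and presheaf_Op_Int: "Op A \<Longrightarrow> Op B \<Longrightarrow> Op (A \<inter> B)"
  and presheaf_Op_Un: "Op A \<Longrightarrow> Op B \<Longrightarrow> Op (A \<union> B)"
  using psh unfolding set_presheaf_def by simp_all

lemma presheaf_Op_UN: "(\<And>i. i < (n::nat) \<Longrightarrow> Op (Us i)) \<Longrightarrow> 0 < n \<Longrightarrow> Op (\<Union>i<n. Us i)"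
proof (induction n)
  case (Suc n)
  then show ?case
    by (cases "n = 0") (simp_all add: UN_lessThan_Suc_split presheaf_Op_Un)
qed simp

lemma compatible_families_restrict_iff:
  "restrict s {..<n} \<in> compatible_families P r n Us \<longleftrightarrow> (\<forall>i<n. s i \<in> P (Us i)) \<and>
    (\<forall>i<n. \<forall>j<n. r (Us i \<inter> Us j) (Us i) (s i) = r (Us i \<inter> Us j) (Us j) (s j))"
proof -
  have "(r (Us i \<inter> Us j) (Us i) (restrict s {..<n} i) = r (Us i \<inter> Us j) (Us j) (restrict s {..<n} j)) \<longleftrightarrow>
      (r (Us i \<inter> Us j) (Us i) (s i) = r (Us i \<inter> Us j) (Us j) (s j))" if "i < n" "j < n" for i j
    using that by simp
  then show ?thesis
    unfolding compatible_families_def mem_Collect_eq restrict_PiE_iff Ball_def lessThan_iff by blast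
qed

lemma restrictions_in_compatible_families:
  assumes U: "Op U" and Us: "\<And>i. i < n \<Longrightarrow> Op (Us i) \<and> Us i \<subseteq> U" and x: "x \<in> P U"
  shows "(\<lambda>i\<in>{..<n}. r (Us i) U x) \<in> compatible_families P r n Us"
proof -
  have "r (Us i \<inter> Us j) (Us i) (r (Us i) U x) = r (Us i \<inter> Us j) U x" if "i < n" "j < n" for i j
    by (rule presheaf_restrict_trans) (use U Us[OF that(1)] Us[OF that(2)] presheaf_Op_Int x in auto)
  then have "r (Us i \<inter> Us j) (Us i) (r (Us i) U x) = r (Us i \<inter> Us j) (Us j) (r (Us j) U x)"
    if "i < n" "j < n" for i j
    using that by (metis Int_commute)
  moreover have "r (Us i) U x \<in> P (Us i)" if "i < n" for i
    using presheaf_restrict_in[OF _ U _ x] Us that by blast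
  ultimately show ?thesis unfolding compatible_families_restrict_iff by blast
qed

lemma compatible_families_subset_image_iff:
  "compatible_families P r n Us \<subseteq> (\<lambda>x. \<lambda>i\<in>{..<n}. r (Us i) U x) ` P U \<longleftrightarrow>
    (\<forall>s. (\<forall>i<n. s i \<in> P (Us i)) \<longrightarrow>
      (\<forall>i<n. \<forall>j<n. r (Us i \<inter> Us j) (Us i) (s i) = r (Us i \<inter> Us j) (Us j) (s j)) \<longrightarrow>
      (\<exists>x\<in>P U. \<forall>i<n. r (Us i) U x = s i))"
  (is "?Eq \<subseteq> ?res ` P U \<longleftrightarrow> ?glue")
proof
  assume surj: "?Eq \<subseteq> ?res ` P U"
  show ?glue
  proof (intro allI impI)
    fix s assume "\<forall>i<n. s i \<in> P (Us i)"
      and "\<forall>i<n. \<forall>j<n. r (Us i \<inter> Us j) (Us i) (s i) = r (Us i \<inter> Us j) (Us j) (s j)"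
    then have "restrict s {..<n} \<in> ?Eq" unfolding compatible_families_restrict_iff by blast
    with surj have "restrict s {..<n} \<in> ?res ` P U" by (rule subsetD)
    then obtain x where x: "x \<in> P U" and eq: "restrict s {..<n} = ?res x" by (rule imageE)
    have "r (Us i) U x = s i" if "i < n" for i using fun_cong[OF eq, of i] that by simp
    then show "\<exists>x\<in>P U. \<forall>i<n. r (Us i) U x = s i" using x by blast
  qed
next
  assume glue: ?glue
  show "?Eq \<subseteq> ?res ` P U"
  proof
    fix s assume s: "s \<in> ?Eq"
    then have s_Pi: "s \<in> PiE {..<n} (\<lambda>i. P (Us i))" and s_in: "\<forall>i<n. s i \<in> P (Us i)"
      and compat: "\<forall>i<n. \<forall>j<n. r (Us i \<inter> Us j) (Us i) (s i) = r (Us i \<inter> Us j) (Us j) (s j)"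
      unfolding compatible_families_def mem_Collect_eq PiE_iff by blast+
    obtain x where x: "x \<in> P U" "\<forall>i<n. r (Us i) U x = s i" using glue s_in compat by blast
    have "?res x = restrict s {..<n}" by (rule restrict_ext) (use x(2) in simp)
    also have "\<dots> = s" using s_Pi by (rule PiE_restrict)
    finally show "s \<in> ?res ` P U" using x(1) by blast
  qed
qed

lemma sheaf_cond_for_iff_bij:
  assumes U: "Op U" and Us: "\<And>i. i < n \<Longrightarrow> Op (Us i) \<and> Us i \<subseteq> U"
  shows "sheaf_cond_for P r U n Us \<longleftrightarrow>
    bij_betw (\<lambda>x. \<lambda>i\<in>{..<n}. r (Us i) U x) (P U) (compatible_families P r n Us)"
    (is "_ \<longleftrightarrow> bij_betw ?res (P U) ?Eq")
proof -
  have res_eq: "?res x = ?res y \<longleftrightarrow> (\<forall>i<n. r (Us i) U x = r (Us i) U y)" for x y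
    by (auto simp: restrict_eq_iff)
  have "?res ` P U \<subseteq> ?Eq"
    using restrictions_in_compatible_families[where n = n and Us = Us, OF U Us] by blast
  then have img: "?res ` P U = ?Eq \<longleftrightarrow> ?Eq \<subseteq> ?res ` P U" by blast
  show ?thesis
    unfolding sheaf_cond_for_def bij_betw_def img compatible_families_subset_image_iff inj_on_def res_eq ..
qed

end

context
  fixes Op :: "'s set \<Rightarrow> bool" and P :: "'s set \<Rightarrow> 'e set" and r :: "'s set \<Rightarrow> 's set \<Rightarrow> 'e \<Rightarrow> 'e"
    and U :: "'s set" and n :: nat and Us :: "nat \<Rightarrow> 's set"
  assumes psh: "set_presheaf Op P r" and sheaf2: "sheaf_cond Op P r 2" and sheafn: "sheaf_cond Op P r n"
    and n: "0 < n" and U: "Op U" and Us: "\<And>i. i < Suc n \<Longrightarrow> Op (Us i)" and cover: "(\<Union>i<Suc n. Us i) = U"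
begin

lemma split_cover:
  "Op (\<Union>i<n. Us i)" "U = (\<Union>i<n. Us i) \<union> Us n" "\<And>i. i < n \<Longrightarrow> Us i \<subseteq> (\<Union>i<n. Us i)"
  "sheaf_cond_for P r (\<Union>i<n. Us i) n Us" "sheaf_cond_for P r U 2 (fam2 (\<Union>i<n. Us i) (Us n))"
proof -
  show V: "Op (\<Union>i<n. Us i)" using presheaf_Op_UN[OF psh] Us n by simp
  show UV: "U = (\<Union>i<n. Us i) \<union> Us n" using cover by (simp add: UN_lessThan_Suc_split)
  show "\<And>i. i < n \<Longrightarrow> Us i \<subseteq> (\<Union>i<n. Us i)" by auto
  show "sheaf_cond_for P r (\<Union>i<n. Us i) n Us" using sheaf_condD[OF sheafn V] Us by simp
  show "sheaf_cond_for P r U 2 (fam2 (\<Union>i<n. Us i) (Us n))"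
  proof (rule sheaf_condD[OF sheaf2 U])
    show "Op (fam2 (\<Union>i<n. Us i) (Us n) i)" for i using V Us by (simp add: fam2_def)
    show "(\<Union>i<2. fam2 (\<Union>i<n. Us i) (Us n) i) = U" using UV by (simp add: UN_fam2)
  qed
qed

lemma sheaf_cond_for_Suc_separated:
  assumes x: "x \<in> P U" and y: "y \<in> P U" and agree: "\<And>i. i < Suc n \<Longrightarrow> r (Us i) U x = r (Us i) U y"
  shows "x = y"
proof -
  define V where "V = (\<Union>i<n. Us i)"
  note V = split_cover[folded V_def]
  have "r V U x = r V U y"
  proof (rule sheaf_cond_for_separated[OF V(4)])
    show "r V U x \<in> P V" "r V U y \<in> P V" using presheaf_restrict_in[OF psh V(1) U] V(2) x y by auto
    fix i assume i: "i < n"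
    have "r (Us i) V (r V U x) = r (Us i) U x"
      using presheaf_restrict_trans[OF psh Us V(1) U] i V x by auto
    also have "\<dots> = r (Us i) U y" using agree i by simp
    also have "\<dots> = r (Us i) V (r V U y)"
      using presheaf_restrict_trans[OF psh Us V(1) U] i V y by auto
    finally show "r (Us i) V (r V U x) = r (Us i) V (r V U y)" .
  qed
  moreover have "r (Us n) U x = r (Us n) U y" using agree by simp
  ultimately show "x = y"
    by (intro sheaf_cond_for_separated[OF V(5) x y]) (auto simp: fam2_def numeral_2_eq_2 less_Suc_eq)
qed

lemma glued_agrees_on_overlap:
  assumes s: "\<And>i. i < Suc n \<Longrightarrow> s i \<in> P (Us i)"
    and compat: "\<And>i j. i < Suc n \<Longrightarrow> j < Suc n \<Longrightarrow> r (Us i \<inter> Us j) (Us i) (s i) = r (Us i \<inter> Us j) (Us j) (s j)"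
    and y: "y \<in> P (\<Union>i<n. Us i)" and ry: "\<And>i. i < n \<Longrightarrow> r (Us i) (\<Union>i<n. Us i) y = s i"
  shows "r ((\<Union>i<n. Us i) \<inter> Us n) (\<Union>i<n. Us i) y = r ((\<Union>i<n. Us i) \<inter> Us n) (Us n) (s n)"
proof -
  define V where "V = (\<Union>i<n. Us i)"
  note V = split_cover[folded V_def]
  have OVn: "Op (V \<inter> Us n)" using presheaf_Op_Int[OF psh V(1) Us] by simp
  have OUiVn: "Op (Us i \<inter> Us n)" if "i < n" for i using presheaf_Op_Int[OF psh Us Us] that by simp
  have "sheaf_cond_for P r (V \<inter> Us n) n (\<lambda>i. Us i \<inter> Us n)"
    by (rule sheaf_condD[OF sheafn OVn OUiVn]) (auto simp: V_def)
  then show ?thesis unfolding V_def[symmetric]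
  proof (rule sheaf_cond_for_separated)
    show "r (V \<inter> Us n) V y \<in> P (V \<inter> Us n)" "r (V \<inter> Us n) (Us n) (s n) \<in> P (V \<inter> Us n)"
      using presheaf_restrict_in[OF psh OVn] V(1) Us y s unfolding V_def by auto
    fix i assume i: "i < n"
    have sub: "Us i \<inter> Us n \<subseteq> V \<inter> Us n" using V(3)[OF i] by auto
    have "r (Us i \<inter> Us n) (V \<inter> Us n) (r (V \<inter> Us n) V y) = r (Us i \<inter> Us n) (Us i) (r (Us i) V y)"
      using presheaf_restrict_trans[OF psh OUiVn[OF i] OVn V(1) sub _ y[folded V_def]]
        presheaf_restrict_trans[OF psh OUiVn[OF i] _ V(1) _ V(3)[OF i] y[folded V_def]] Us i by auto
    also have "\<dots> = r (Us i \<inter> Us n) (Us n) (s n)" using ry[folded V_def] compat[of i n] i by simp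
    also have "\<dots> = r (Us i \<inter> Us n) (V \<inter> Us n) (r (V \<inter> Us n) (Us n) (s n))"
      using presheaf_restrict_trans[OF psh OUiVn[OF i] OVn Us sub _ s] i by auto
    finally show "r (Us i \<inter> Us n) (V \<inter> Us n) (r (V \<inter> Us n) V y) =
      r (Us i \<inter> Us n) (V \<inter> Us n) (r (V \<inter> Us n) (Us n) (s n))" .
  qed
qed

lemma sheaf_cond_for_Suc_glue:
  assumes s: "\<And>i. i < Suc n \<Longrightarrow> s i \<in> P (Us i)"
    and compat: "\<And>i j. i < Suc n \<Longrightarrow> j < Suc n \<Longrightarrow> r (Us i \<inter> Us j) (Us i) (s i) = r (Us i \<inter> Us j) (Us j) (s j)"
  shows "\<exists>x\<in>P U. \<forall>i<Suc n. r (Us i) U x = s i"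
proof -
  define V where "V = (\<Union>i<n. Us i)"
  note V = split_cover[folded V_def]
  obtain y where y: "y \<in> P V" and ry: "\<forall>i<n. r (Us i) V y = s i"
    using sheaf_cond_for_glue[OF V(4)] s compat by (metis less_SucI)
  have overlap: "r (V \<inter> Us n) V y = r (V \<inter> Us n) (Us n) (s n)"
    using glued_agrees_on_overlap[OF s compat y[unfolded V_def]] ry unfolding V_def by simp
  obtain x where x: "x \<in> P U" and rx: "\<forall>i<2. r (fam2 V (Us n) i) U x = fam2 y (s n) i"
  proof (rule sheaf_cond_for_glue[OF V(5), of "fam2 y (s n)", THEN bexE])
    show "fam2 y (s n) i \<in> P (fam2 V (Us n) i)" if "i < 2" for i
      using y s that by (simp add: fam2_def)
    show "r (fam2 V (Us n) i \<inter> fam2 V (Us n) j) (fam2 V (Us n) i) (fam2 y (s n) i) =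
      r (fam2 V (Us n) i \<inter> fam2 V (Us n) j) (fam2 V (Us n) j) (fam2 y (s n) j)" if "i < 2" "j < 2" for i j
      using that overlap by (auto simp: fam2_def numeral_2_eq_2 less_Suc_eq Int_commute)
  qed blast
  have "r (Us i) U x = s i" if i: "i < Suc n" for i
  proof (cases "i < n")
    case True
    have "r (Us i) U x = r (Us i) V (r V U x)"
      using presheaf_restrict_trans[OF psh Us V(1) U] True V x by auto
    then show ?thesis using rx ry True by (simp add: all_less_2)
  next
    case False
    with i have "i = n" by simp
    then show ?thesis using rx by (simp add: all_less_2 fam2_def)
  qed
  then show ?thesis using x by blast
qed

end

lemma sheaf_cond_from_2:
  assumes psh: "set_presheaf Op P r" and sheaf2: "sheaf_cond Op P r 2" and n: "2 \<le> n"
  shows "sheaf_cond Op P r n"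
  using n
proof (induction n rule: dec_induct)
  case (step n)
  have n: "0 < n" using step.hyps by simp
  show ?case unfolding sheaf_cond_def sheaf_cond_for_def
  proof (intro allI impI conjI ballI)
    fix U Us assume U: "Op U" and Us: "\<forall>i<Suc n. Op (Us i)" and cover: "(\<Union>i<Suc n. Us i) = U"
    note ctxt = psh sheaf2 step.IH n U Us[rule_format] cover
    show "x = y" if "x \<in> P U" "y \<in> P U" "\<forall>i<Suc n. r (Us i) U x = r (Us i) U y" for x y
      using sheaf_cond_for_Suc_separated[OF ctxt] that by blast
    show "\<exists>x\<in>P U. \<forall>i<Suc n. r (Us i) U x = s i"
      if "\<forall>i<Suc n. s i \<in> P (Us i)"
        "\<forall>i<Suc n. \<forall>j<Suc n. r (Us i \<inter> Us j) (Us i) (s i) = r (Us i \<inter> Us j) (Us j) (s j)" for s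
      using sheaf_cond_for_Suc_glue[OF ctxt] that by blast
  qed
qed (fact sheaf2)

section \<open>Presheaves of groupoids and the condition \<open>sh(n)\<close>\<close>

declare openin_Int [simp] le_infI1 [simp] le_infI2 [simp]

locale groupoid_presheaf =
  fixes X :: "'a topology" and FF :: "'a set \<Rightarrow> ('o, 'm) cat"
    and resO :: "'a set \<Rightarrow> 'a set \<Rightarrow> 'o \<Rightarrow> 'o" and resA :: "'a set \<Rightarrow> 'a set \<Rightarrow> 'm \<Rightarrow> 'm"
  assumes presheaf: "grp_presheaf X FF resO resA"
begin

lemmas groupoid_FF = presheaf[unfolded grp_presheaf_def, THEN conjunct1, rule_format]

lemma category_FF [simp]: "openin X U \<Longrightarrow> is_category (FF U)"
  using groupoid_FF is_groupoid_is_category by blast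

lemmas restriction_functor = presheaf[unfolded grp_presheaf_def, THEN conjunct2, THEN conjunct1, rule_format]

context
  fixes V W :: "'a set"
  assumes V: "openin X V" and W: "openin X W" and VW: "V \<subseteq> W"
begin

lemma resO_in_Obj [simp]: "x \<in> Obj (FF W) \<Longrightarrow> resO V W x \<in> Obj (FF V)"
  and resA_in_Arr [simp]: "f \<in> Arr (FF W) \<Longrightarrow> resA V W f \<in> Arr (FF V)"
  and Dom_resA [simp]: "f \<in> Arr (FF W) \<Longrightarrow> Dom (FF V) (resA V W f) = resO V W (Dom (FF W) f)"
  and Cod_resA [simp]: "f \<in> Arr (FF W) \<Longrightarrow> Cod (FF V) (resA V W f) = resO V W (Cod (FF W) f)"
  and resA_Ide [simp]: "x \<in> Obj (FF W) \<Longrightarrow> resA V W (Ide (FF W) x) = Ide (FF V) (resO V W x)"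
  and resA_Comp [simp]: "f \<in> Arr (FF W) \<Longrightarrow> g \<in> Arr (FF W) \<Longrightarrow> Cod (FF W) f = Dom (FF W) g \<Longrightarrow>
    resA V W (Comp (FF W) g f) = Comp (FF V) (resA V W g) (resA V W f)"
  using restriction_functor[OF V W VW]
  by (simp_all add: functor_Obj functor_Arr functor_Dom functor_Cod functor_Ide functor_Comp)

end

lemma resO_id [simp]: "openin X W \<Longrightarrow> x \<in> Obj (FF W) \<Longrightarrow> resO W W x = x"
  and resA_id [simp]: "openin X W \<Longrightarrow> f \<in> Arr (FF W) \<Longrightarrow> resA W W f = f"
  using presheaf[unfolded grp_presheaf_def, THEN conjunct2, THEN conjunct2, THEN conjunct1] by blast+

lemma resO_trans [simp]: "openin X V \<Longrightarrow> openin X W \<Longrightarrow> openin X Z \<Longrightarrow> V \<subseteq> W \<Longrightarrow> W \<subseteq> Z \<Longrightarrow>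
    x \<in> Obj (FF Z) \<Longrightarrow> resO V W (resO W Z x) = resO V Z x"
  and resA_trans [simp]: "openin X V \<Longrightarrow> openin X W \<Longrightarrow> openin X Z \<Longrightarrow> V \<subseteq> W \<Longrightarrow> W \<subseteq> Z \<Longrightarrow>
    f \<in> Arr (FF Z) \<Longrightarrow> resA V W (resA W Z f) = resA V Z f"
  using presheaf[unfolded grp_presheaf_def, THEN conjunct2, THEN conjunct2, THEN conjunct2] by blast+

lemma set_presheaf_Obj: "set_presheaf (openin X) (\<lambda>U. Obj (FF U)) resO"
  and set_presheaf_Arr: "set_presheaf (openin X) (\<lambda>U. Arr (FF U)) resA"
  unfolding set_presheaf_def by (simp_all add: openin_Un)

lemma open_coverD:
  assumes "open_cover X U n Us"
  shows "openin X U" "\<And>i. i < n \<Longrightarrow> openin X (Us i)" "\<And>i. i < n \<Longrightarrow> Us i \<subseteq> U"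
  using assms unfolding open_cover_def by blast+

lemma open_cover_iff: "open_cover X U n Us \<longleftrightarrow> openin X U \<and> (\<forall>i<n. openin X (Us i)) \<and> (\<Union>i<n. Us i) = U"
  unfolding open_cover_def ..

lemma eq_cat_functor:
  assumes cover: "open_cover X U n Us"
  shows "is_functor (FF U) (eq_cat FF resO resA n Us)
    (\<lambda>x. \<lambda>i\<in>{..<n}. resO (Us i) U x) (\<lambda>f. \<lambda>i\<in>{..<n}. resA (Us i) U f)"
proof -
  note U = open_coverD[OF cover]
  show ?thesis unfolding is_functor_def
  proof (intro conjI ballI impI)
    show "(\<lambda>i\<in>{..<n}. resO (Us i) U x) \<in> Obj (eq_cat FF resO resA n Us)" if "x \<in> Obj (FF U)" for x
      unfolding eq_cat_def using that U by (simp add: restrict_PiE_iff cong: restrict_cong)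
    fix f assume f: "f \<in> Arr (FF U)"
    show "(\<lambda>i\<in>{..<n}. resA (Us i) U f) \<in> Arr (eq_cat FF resO resA n Us)"
      "Dom (eq_cat FF resO resA n Us) (\<lambda>i\<in>{..<n}. resA (Us i) U f) = (\<lambda>i\<in>{..<n}. resO (Us i) U (Dom (FF U) f))"
      "Cod (eq_cat FF resO resA n Us) (\<lambda>i\<in>{..<n}. resA (Us i) U f) = (\<lambda>i\<in>{..<n}. resO (Us i) U (Cod (FF U) f))"
      unfolding eq_cat_def using f U by (simp_all add: restrict_PiE_iff cong: restrict_cong)
    show "(\<lambda>i\<in>{..<n}. resA (Us i) U (Comp (FF U) g f)) =
      Comp (eq_cat FF resO resA n Us) (\<lambda>i\<in>{..<n}. resA (Us i) U g) (\<lambda>i\<in>{..<n}. resA (Us i) U f)"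
      if "g \<in> Arr (FF U)" "Cod (FF U) f = Dom (FF U) g" for g
      unfolding eq_cat_def using f that U by (simp cong: restrict_cong)
  next
    show "(\<lambda>i\<in>{..<n}. resA (Us i) U (Ide (FF U) x)) = Ide (eq_cat FF resO resA n Us) (\<lambda>i\<in>{..<n}. resO (Us i) U x)"
      if "x \<in> Obj (FF U)" for x
      unfolding eq_cat_def using that U by (simp cong: restrict_cong)
  qed
qed

text \<open>An isomorphism of categories is a bijection on objects and on arrows, and the objects
  (arrows) of the equaliser groupoid are exactly the compatible families of objects (arrows).\<close>

lemma eq_cat_iso_iff_sheaf_cond_for:
  assumes cover: "open_cover X U n Us"
  shows "is_cat_iso (FF U) (eq_cat FF resO resA n Us)
      (\<lambda>x. \<lambda>i\<in>{..<n}. resO (Us i) U x) (\<lambda>f. \<lambda>i\<in>{..<n}. resA (Us i) U f) \<longleftrightarrow>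
    sheaf_cond_for (\<lambda>U. Obj (FF U)) resO U n Us \<and> sheaf_cond_for (\<lambda>U. Arr (FF U)) resA U n Us"
proof -
  note U = open_coverD[OF cover]
  have "is_cat_iso (FF U) (eq_cat FF resO resA n Us)
      (\<lambda>x. \<lambda>i\<in>{..<n}. resO (Us i) U x) (\<lambda>f. \<lambda>i\<in>{..<n}. resA (Us i) U f) \<longleftrightarrow>
    bij_betw (\<lambda>x. \<lambda>i\<in>{..<n}. resO (Us i) U x) (Obj (FF U)) (Obj (eq_cat FF resO resA n Us)) \<and>
    bij_betw (\<lambda>f. \<lambda>i\<in>{..<n}. resA (Us i) U f) (Arr (FF U)) (Arr (eq_cat FF resO resA n Us))"
    using is_cat_iso_iff_bij[OF category_FF[OF U(1)] eq_cat_functor[OF cover]] .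
  also have "\<dots> \<longleftrightarrow> sheaf_cond_for (\<lambda>U. Obj (FF U)) resO U n Us \<and> sheaf_cond_for (\<lambda>U. Arr (FF U)) resA U n Us"
    using sheaf_cond_for_iff_bij[OF set_presheaf_Obj U(1)] sheaf_cond_for_iff_bij[OF set_presheaf_Arr U(1)] U(2,3)
    by (simp add: eq_cat_def compatible_families_def)
  finally show ?thesis .
qed

lemma sh_cond_iff_sheaf_cond:
  "sh_cond X FF resO resA n \<longleftrightarrow>
     sheaf_cond (openin X) (\<lambda>U. Obj (FF U)) resO n \<and> sheaf_cond (openin X) (\<lambda>U. Arr (FF U)) resA n"
proof -
  have "sh_cond X FF resO resA n \<longleftrightarrow> (\<forall>U Us. open_cover X U n Us \<longrightarrow>
      sheaf_cond_for (\<lambda>U. Obj (FF U)) resO U n Us \<and> sheaf_cond_for (\<lambda>U. Arr (FF U)) resA U n Us)"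
    unfolding sh_cond_def using eq_cat_iso_iff_sheaf_cond_for by simp
  also have "\<dots> \<longleftrightarrow> sheaf_cond (openin X) (\<lambda>U. Obj (FF U)) resO n \<and> sheaf_cond (openin X) (\<lambda>U. Arr (FF U)) resA n"
    (is "(\<forall>U Us. _ \<longrightarrow> ?Ob U Us \<and> ?Ar U Us) \<longleftrightarrow> _")
  proof -
    have "(\<forall>U Us. open_cover X U n Us \<longrightarrow> ?Ob U Us \<and> ?Ar U Us) \<longleftrightarrow>
      (\<forall>U Us. open_cover X U n Us \<longrightarrow> ?Ob U Us) \<and> (\<forall>U Us. open_cover X U n Us \<longrightarrow> ?Ar U Us)"
      by blast
    then show ?thesis unfolding sheaf_cond_def open_cover_iff imp_conjL .
  qed
  finally show ?thesis .
qed

lemma sh_cond_from_2: "sh_cond X FF resO resA 2 \<Longrightarrow> 2 \<le> n \<Longrightarrow> sh_cond X FF resO resA n"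
  using sheaf_cond_from_2[OF set_presheaf_Obj] sheaf_cond_from_2[OF set_presheaf_Arr]
  by (simp add: sh_cond_iff_sheaf_cond)

end

section \<open>The descent groupoid\<close>

context groupoid_presheaf
begin

abbreviation "DObj n Us \<equiv> descent_objs FF resO resA n Us"
abbreviation "Desc n Us \<equiv> descent_cat FF resO resA n Us"

lemma descent_cat_simps[simp]: "Obj (Desc n Us) = DObj n Us" "Dom (Desc n Us) (s,t,f) = s" "Cod (Desc n Us) (s,t,f) = t"
  "Comp (Desc n Us) (s',t',g) (s,t,f) = (s, t', \<lambda>i\<in>{..<n}. Comp (FF (Us i)) (g i) (f i))"
  "Ide (Desc n Us) s = (s, s, \<lambda>i\<in>{..<n}. Ide (FF (Us i)) (fst s i))"
  by (simp_all add: descent_cat_def)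

lemma descent_arr_iff: "(s,t,f) \<in> Arr (Desc n Us) \<longleftrightarrow> s \<in> DObj n Us \<and> t \<in> DObj n Us \<and> f \<in> PiE {..<n} (\<lambda>i. Arr (FF (Us i))) \<and>
   (\<forall>i<n. Dom (FF (Us i)) (f i) = fst s i \<and> Cod (FF (Us i)) (f i) = fst t i) \<and>
   (\<forall>i<n. \<forall>j<n. Comp (FF (Us i \<inter> Us j)) (snd t i j) (resA (Us i \<inter> Us j) (Us i) (f i))
       = Comp (FF (Us i \<inter> Us j)) (resA (Us i \<inter> Us j) (Us j) (f j)) (snd s i j))"
  by (simp add: descent_cat_def)

lemma descent_obj_iff: "(x,phi) \<in> DObj n Us \<longleftrightarrow> x \<in> PiE {..<n} (\<lambda>i. Obj (FF (Us i))) \<and>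
        phi \<in> PiE {..<n} (\<lambda>i. PiE {..<n} (\<lambda>j. Arr (FF (Us i \<inter> Us j)))) \<and>
        (\<forall>i<n. \<forall>j<n.
           Dom (FF (Us i \<inter> Us j)) (phi i j) = resO (Us i \<inter> Us j) (Us i) (x i) \<and>
           Cod (FF (Us i \<inter> Us j)) (phi i j) = resO (Us i \<inter> Us j) (Us j) (x j)) \<and>
        (\<forall>i<n. \<forall>j<n. \<forall>k<n.
           Comp (FF (Us i \<inter> Us j \<inter> Us k))
             (resA (Us i \<inter> Us j \<inter> Us k) (Us j \<inter> Us k) (phi j k))
             (resA (Us i \<inter> Us j \<inter> Us k) (Us i \<inter> Us j) (phi i j))
           = resA (Us i \<inter> Us j \<inter> Us k) (Us i \<inter> Us k) (phi i k))"
  by (simp add: descent_objs_def)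

lemma descent_objD:
  assumes "s \<in> DObj n Us" "i < n" "j < n"
  shows "fst s i \<in> Obj (FF (Us i))" "snd s i j \<in> Arr (FF (Us i \<inter> Us j))"
    "Dom (FF (Us i \<inter> Us j)) (snd s i j) = resO (Us i \<inter> Us j) (Us i) (fst s i)"
    "Cod (FF (Us i \<inter> Us j)) (snd s i j) = resO (Us i \<inter> Us j) (Us j) (fst s j)"
proof -
  obtain x phi where s: "s = (x, phi)" by (cases s)
  have "(x,phi) \<in> DObj n Us" using assms(1) s by simp
  note d = this[unfolded descent_obj_iff]
  show "fst s i \<in> Obj (FF (Us i))" using d assms s by (auto simp: PiE_iff)
  show "snd s i j \<in> Arr (FF (Us i \<inter> Us j))" using d assms s by (auto simp: PiE_iff)
  show "Dom (FF (Us i \<inter> Us j)) (snd s i j) = resO (Us i \<inter> Us j) (Us i) (fst s i)" using d assms s by auto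
  show "Cod (FF (Us i \<inter> Us j)) (snd s i j) = resO (Us i \<inter> Us j) (Us j) (fst s j)" using d assms s by auto
qed

lemma descent_obj_cocycle:
  assumes "s \<in> DObj n Us" "i < n" "j < n" "k < n"
  shows "Comp (FF (Us i \<inter> Us j \<inter> Us k))
             (resA (Us i \<inter> Us j \<inter> Us k) (Us j \<inter> Us k) (snd s j k))
             (resA (Us i \<inter> Us j \<inter> Us k) (Us i \<inter> Us j) (snd s i j))
           = resA (Us i \<inter> Us j \<inter> Us k) (Us i \<inter> Us k) (snd s i k)"
proof -
  obtain x phi where s: "s = (x, phi)" by (cases s)
  have "(x,phi) \<in> DObj n Us" using assms(1) s by simp
  note d = this[unfolded descent_obj_iff]
  show ?thesis using d assms s by auto
qed

lemma descent_arrD: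
  assumes "(s,t,f) \<in> Arr (Desc n Us)" "i < n" "j < n"
  shows "s \<in> DObj n Us" "t \<in> DObj n Us" "f \<in> PiE {..<n} (\<lambda>i. Arr (FF (Us i)))" "f i \<in> Arr (FF (Us i))"
    "Dom (FF (Us i)) (f i) = fst s i" "Cod (FF (Us i)) (f i) = fst t i"
    "Comp (FF (Us i \<inter> Us j)) (snd t i j) (resA (Us i \<inter> Us j) (Us i) (f i))
       = Comp (FF (Us i \<inter> Us j)) (resA (Us i \<inter> Us j) (Us j) (f j)) (snd s i j)"
  using assms unfolding descent_arr_iff by (auto simp: PiE_iff)

lemma descent_obj_diag:
  assumes s: "s \<in> DObj n Us" and i: "i < n" and Ui: "openin X (Us i)"
  shows "snd s i i = Ide (FF (Us i)) (fst s i)"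
proof -
  have idem: "Comp (FF (Us i)) (snd s i i) (snd s i i) = snd s i i"
    using descent_obj_cocycle[OF s i i i] descent_objD[OF s i i] Ui by simp
  have "snd s i i \<in> Arr (FF (Us i))" "Dom (FF (Us i)) (snd s i i) = fst s i" "Cod (FF (Us i)) (snd s i i) = fst s i"
    using descent_objD[OF s i i] Ui by simp_all
  then show ?thesis using grpd_idempotent_eq_Ide[OF groupoid_FF[OF Ui] _ _ idem] by simp
qed

lemma descent_obj_swap_inverse:
  assumes s: "s \<in> DObj n Us" and i: "i < n" and j: "j < n" and Ui: "openin X (Us i)" and Uj: "openin X (Us j)"
  shows "Comp (FF (Us i \<inter> Us j)) (snd s j i) (snd s i j) = Ide (FF (Us i \<inter> Us j)) (resO (Us i \<inter> Us j) (Us i) (fst s i))"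
proof -
  have e1: "Us i \<inter> Us j \<inter> Us i = Us i \<inter> Us j" and e2: "Us j \<inter> Us i = Us i \<inter> Us j" by blast+
  have "Comp (FF (Us i \<inter> Us j)) (resA (Us i \<inter> Us j) (Us i \<inter> Us j) (snd s j i))
      (resA (Us i \<inter> Us j) (Us i \<inter> Us j) (snd s i j)) = resA (Us i \<inter> Us j) (Us i) (snd s i i)"
    using descent_obj_cocycle[OF s i j i] unfolding e1 e2 by simp
  moreover have "snd s j i \<in> Arr (FF (Us i \<inter> Us j))" using descent_objD(2)[OF s j i] unfolding e2 .
  ultimately show ?thesis
    using descent_objD(2)[OF s i j] descent_obj_diag[OF s i Ui] descent_objD(1)[OF s i i] Ui Uj by simp
qed

lemma descent_obj_truncate:
  assumes s: "s \<in> DObj n Us" and m: "m \<le> n"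
  shows "(restrict (fst s) {..<m}, \<lambda>i\<in>{..<m}. restrict (snd s i) {..<m}) \<in> DObj m Us"
proof -
  have lt: "i < n" if "i < m" for i using that m by simp
  have "restrict (fst s) {..<m} \<in> PiE {..<m} (\<lambda>i. Obj (FF (Us i)))"
    using descent_objD(1)[OF s lt lt] by (simp add: restrict_PiE_iff)
  moreover have "(\<lambda>i\<in>{..<m}. restrict (snd s i) {..<m}) \<in> PiE {..<m} (\<lambda>i. PiE {..<m} (\<lambda>j. Arr (FF (Us i \<inter> Us j))))"
    using descent_objD(2)[OF s lt lt] by (simp add: restrict_PiE_iff)
  moreover have "\<forall>i<m. \<forall>j<m.
      Dom (FF (Us i \<inter> Us j)) ((\<lambda>i\<in>{..<m}. restrict (snd s i) {..<m}) i j) = resO (Us i \<inter> Us j) (Us i) (restrict (fst s) {..<m} i) \<and>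
      Cod (FF (Us i \<inter> Us j)) ((\<lambda>i\<in>{..<m}. restrict (snd s i) {..<m}) i j) = resO (Us i \<inter> Us j) (Us j) (restrict (fst s) {..<m} j)"
    using descent_objD(3,4)[OF s lt lt] by simp
  moreover have "\<forall>i<m. \<forall>j<m. \<forall>k<m. Comp (FF (Us i \<inter> Us j \<inter> Us k))
      (resA (Us i \<inter> Us j \<inter> Us k) (Us j \<inter> Us k) ((\<lambda>i\<in>{..<m}. restrict (snd s i) {..<m}) j k))
      (resA (Us i \<inter> Us j \<inter> Us k) (Us i \<inter> Us j) ((\<lambda>i\<in>{..<m}. restrict (snd s i) {..<m}) i j))
      = resA (Us i \<inter> Us j \<inter> Us k) (Us i \<inter> Us k) ((\<lambda>i\<in>{..<m}. restrict (snd s i) {..<m}) i k)"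
    using descent_obj_cocycle[OF s lt lt lt] by simp
  ultimately show ?thesis unfolding descent_obj_iff by blast
qed

text \<open>The gluing maps of this datum are \<open>\<phi>\<^sub>0\<^sub>1 = \<psi>\<close>, \<open>\<phi>\<^sub>1\<^sub>0 = \<psi>\<^sup>-\<^sup>1\<close> and identities on the diagonal.\<close>

lemma descent_obj_two:
  assumes A: "openin X A" and B: "openin X B" and y: "y \<in> Obj (FF A)" and z: "z \<in> Obj (FF B)"
    and psi: "psi \<in> Arr (FF (A \<inter> B))" "Dom (FF (A \<inter> B)) psi = resO (A \<inter> B) A y"
      "Cod (FF (A \<inter> B)) psi = resO (A \<inter> B) B z"
  shows "(restrict (fam2 y z) {..<2}, \<lambda>i\<in>{..<2}. \<lambda>j\<in>{..<2}.
      fam2 (fam2 (Ide (FF A) y) psi j) (fam2 (grpd_inv (FF (A \<inter> B)) psi) (Ide (FF B) z) j) i)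
    \<in> DObj 2 (fam2 A B)"
proof -
  note inv = is_inverseD[OF grpd_inv_is_inverse[OF groupoid_FF[OF openin_Int[OF A B]] psi(1)]]
  have e1: "B \<inter> A = A \<inter> B" and e2: "A \<inter> B \<inter> A = A \<inter> B" and e3: "A \<inter> B \<inter> B = A \<inter> B" by blast+
  show ?thesis unfolding descent_obj_iff
    by (simp only: restrict_PiE_iff all_less_2 Ball_def lessThan_iff)
      (use A B y z psi inv in \<open>simp add: e1 e2 e3 fam2_def\<close>)
qed

context
  fixes n :: nat and Us :: "nat \<Rightarrow> 'a set"
  assumes Us_open: "\<And>i. i < n \<Longrightarrow> openin X (Us i)"
begin

lemma descent_Ide_in_Arr: assumes s: "s \<in> DObj n Us" shows "Ide (Desc n Us) s \<in> Arr (Desc n Us)"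
proof -
  have in_Pi: "(\<lambda>i\<in>{..<n}. Ide (FF (Us i)) (fst s i)) \<in> PiE {..<n} (\<lambda>i. Arr (FF (Us i)))"
    using descent_objD(1)[OF s] Us_open by (simp add: restrict_PiE_iff)
  have compat: "Comp (FF (Us i \<inter> Us j)) (snd s i j) (resA (Us i \<inter> Us j) (Us i) ((\<lambda>i\<in>{..<n}. Ide (FF (Us i)) (fst s i)) i))
       = Comp (FF (Us i \<inter> Us j)) (resA (Us i \<inter> Us j) (Us j) ((\<lambda>i\<in>{..<n}. Ide (FF (Us i)) (fst s i)) j)) (snd s i j)"
    if i: "i < n" and j: "j < n" for i j
    using descent_objD[OF s i j] descent_objD(1)[OF s j j] Us_open[OF i] Us_open[OF j] i j by simp
  show ?thesis unfolding descent_cat_simps descent_arr_iff using s in_Pi compat descent_objD(1)[OF s] Us_open by simp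
qed

lemma descent_Comp_in_Arr: assumes e1: "(s,t,f) \<in> Arr (Desc n Us)" and e2: "(t,u,g) \<in> Arr (Desc n Us)"
  shows "(s, u, \<lambda>i\<in>{..<n}. Comp (FF (Us i)) (g i) (f i)) \<in> Arr (Desc n Us)"
proof -
  have in_Pi: "(\<lambda>i\<in>{..<n}. Comp (FF (Us i)) (g i) (f i)) \<in> PiE {..<n} (\<lambda>i. Arr (FF (Us i)))"
    using descent_arrD[OF e1] descent_arrD[OF e2] Us_open by (simp add: restrict_PiE_iff)
  have compat: "Comp (FF (Us i \<inter> Us j)) (snd u i j) (resA (Us i \<inter> Us j) (Us i) ((\<lambda>i\<in>{..<n}. Comp (FF (Us i)) (g i) (f i)) i))
       = Comp (FF (Us i \<inter> Us j)) (resA (Us i \<inter> Us j) (Us j) ((\<lambda>i\<in>{..<n}. Comp (FF (Us i)) (g i) (f i)) j)) (snd s i j)"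
    if i: "i < n" and j: "j < n" for i j
  proof -
    let ?A = "Us i \<inter> Us j"
    have OA: "openin X ?A" and OI: "openin X (Us i)" and OJ: "openin X (Us j)" using Us_open i j by auto
    note f1 = descent_arrD[OF e1 i j] and f2 = descent_arrD[OF e1 j i]
    note g1 = descent_arrD[OF e2 i j] and g2 = descent_arrD[OF e2 j i]
    note so = descent_objD[OF descent_arrD(1)[OF e1 i j] i j] and to = descent_objD[OF descent_arrD(2)[OF e1 i j] i j]
      and uo = descent_objD[OF descent_arrD(2)[OF e2 i j] i j]
    have r1: "resA ?A (Us i) (Comp (FF (Us i)) (g i) (f i)) = Comp (FF ?A) (resA ?A (Us i) (g i)) (resA ?A (Us i) (f i))"
      using f1(1-6) g1(1-6) OA OI by simp
    have r2: "resA ?A (Us j) (Comp (FF (Us j)) (g j) (f j)) = Comp (FF ?A) (resA ?A (Us j) (g j)) (resA ?A (Us j) (f j))"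
      using f2(1-6) g2(1-6) OA OJ by simp
    have "Comp (FF ?A) (snd u i j) (Comp (FF ?A) (resA ?A (Us i) (g i)) (resA ?A (Us i) (f i)))
        = Comp (FF ?A) (Comp (FF ?A) (snd u i j) (resA ?A (Us i) (g i))) (resA ?A (Us i) (f i))"
      using f1(1-6) g1(1-6) uo OA OI by (simp add: cat_Comp_assoc)
    also have "\<dots> = Comp (FF ?A) (Comp (FF ?A) (resA ?A (Us j) (g j)) (snd t i j)) (resA ?A (Us i) (f i))"
      using g1(7) by simp
    also have "\<dots> = Comp (FF ?A) (resA ?A (Us j) (g j)) (Comp (FF ?A) (snd t i j) (resA ?A (Us i) (f i)))"
      using f1(1-6) g2(1-6) to OA OI OJ by (simp add: cat_Comp_assoc)
    also have "\<dots> = Comp (FF ?A) (resA ?A (Us j) (g j)) (Comp (FF ?A) (resA ?A (Us j) (f j)) (snd s i j))"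
      using f1(7) by simp
    also have "\<dots> = Comp (FF ?A) (Comp (FF ?A) (resA ?A (Us j) (g j)) (resA ?A (Us j) (f j))) (snd s i j)"
      using f2(1-6) g2(1-6) so OA OJ by (simp add: cat_Comp_assoc)
    finally show ?thesis using r1 r2 i j by simp
  qed
  have E1: "s \<in> DObj n Us" "\<forall>i<n. Dom (FF (Us i)) (f i) = fst s i \<and> Cod (FF (Us i)) (f i) = fst t i"
    "\<forall>i<n. f i \<in> Arr (FF (Us i))"
    using e1 unfolding descent_arr_iff by (auto simp: PiE_iff)
  have E2: "u \<in> DObj n Us" "\<forall>i<n. Dom (FF (Us i)) (g i) = fst t i \<and> Cod (FF (Us i)) (g i) = fst u i"
    "\<forall>i<n. g i \<in> Arr (FF (Us i))"
    using e2 unfolding descent_arr_iff by (auto simp: PiE_iff)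
  have dom_cod: "\<forall>i<n. Dom (FF (Us i)) ((\<lambda>i\<in>{..<n}. Comp (FF (Us i)) (g i) (f i)) i) = fst s i \<and>
      Cod (FF (Us i)) ((\<lambda>i\<in>{..<n}. Comp (FF (Us i)) (g i) (f i)) i) = fst u i"
    using E1 E2 Us_open by simp
  show ?thesis unfolding descent_arr_iff using E1(1) E2(1) in_Pi compat dom_cod by blast
qed

lemma descent_arr_family: assumes e: "(s,t,f) \<in> Arr (Desc n Us)"
  shows "s \<in> DObj n Us" "t \<in> DObj n Us" "f \<in> PiE {..<n} (\<lambda>i. Arr (FF (Us i)))"
    "\<forall>i<n. f i \<in> Arr (FF (Us i)) \<and> Dom (FF (Us i)) (f i) = fst s i \<and> Cod (FF (Us i)) (f i) = fst t i"
  using e unfolding descent_arr_iff by (auto simp: PiE_iff)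

lemma descent_Comp_Ide_left: assumes e: "e \<in> Arr (Desc n Us)" shows "Comp (Desc n Us) (Ide (Desc n Us) (Cod (Desc n Us) e)) e = e"
proof -
  obtain s t f where ee: "e = (s,t,f)" by (cases e)
  note E = descent_arr_family[OF e[unfolded ee]]
  have "(\<lambda>i\<in>{..<n}. Comp (FF (Us i)) ((\<lambda>i\<in>{..<n}. Ide (FF (Us i)) (fst t i)) i) (f i)) = (\<lambda>i\<in>{..<n}. f i)"
    by (rule restrict_ext) (use E(4) Us_open in simp)
  also have "\<dots> = f" using E(3) by simp
  finally show ?thesis using ee by simp
qed

lemma descent_Comp_Ide_right: assumes e: "e \<in> Arr (Desc n Us)" shows "Comp (Desc n Us) e (Ide (Desc n Us) (Dom (Desc n Us) e)) = e"
proof -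
  obtain s t f where ee: "e = (s,t,f)" by (cases e)
  note E = descent_arr_family[OF e[unfolded ee]]
  have "(\<lambda>i\<in>{..<n}. Comp (FF (Us i)) (f i) ((\<lambda>i\<in>{..<n}. Ide (FF (Us i)) (fst s i)) i)) = (\<lambda>i\<in>{..<n}. f i)"
    by (rule restrict_ext) (use E(4) Us_open in simp)
  also have "\<dots> = f" using E(3) by simp
  finally show ?thesis using ee by simp
qed

lemma descent_Comp_assoc: assumes e1: "e1 \<in> Arr (Desc n Us)" and e2: "e2 \<in> Arr (Desc n Us)" and e3: "e3 \<in> Arr (Desc n Us)"
  and c12: "Cod (Desc n Us) e1 = Dom (Desc n Us) e2" and c23: "Cod (Desc n Us) e2 = Dom (Desc n Us) e3"
  shows "Comp (Desc n Us) e3 (Comp (Desc n Us) e2 e1) = Comp (Desc n Us) (Comp (Desc n Us) e3 e2) e1"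
proof -
  obtain s t f where ee1: "e1 = (s,t,f)" by (cases e1)
  obtain t' u g where ee2: "e2 = (t',u,g)" by (cases e2)
  obtain u' v h where ee3: "e3 = (u',v,h)" by (cases e3)
  have tt: "t' = t" and uu: "u' = u" using c12 c23 ee1 ee2 ee3 by auto
  note E1 = descent_arr_family[OF e1[unfolded ee1]] and E2 = descent_arr_family[OF e2[unfolded ee2 tt]] and E3 = descent_arr_family[OF e3[unfolded ee3 uu]]
  have "(\<lambda>i\<in>{..<n}. Comp (FF (Us i)) (h i) ((\<lambda>i\<in>{..<n}. Comp (FF (Us i)) (g i) (f i)) i))
      = (\<lambda>i\<in>{..<n}. Comp (FF (Us i)) ((\<lambda>i\<in>{..<n}. Comp (FF (Us i)) (h i) (g i)) i) (f i))"
    by (rule restrict_ext) (use E1(4) E2(4) E3(4) Us_open in \<open>simp add: cat_Comp_assoc\<close>)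
  thus ?thesis using ee1 ee2 ee3 tt uu by simp
qed

lemma descent_inverse: assumes e: "(s,t,f) \<in> Arr (Desc n Us)"
  shows "is_inverse (Desc n Us) (s,t,f) (t, s, \<lambda>i\<in>{..<n}. grpd_inv (FF (Us i)) (f i))"
proof -
  note E = descent_arr_family[OF e]
  have iv: "is_inverse (FF (Us i)) (f i) (grpd_inv (FF (Us i)) (f i))" if i: "i < n" for i
    using grpd_inv_is_inverse[OF groupoid_FF[OF Us_open[OF i]]] E(4) i by blast
  have iv2: "grpd_inv (FF (Us i)) (f i) \<in> Arr (FF (Us i)) \<and> Dom (FF (Us i)) (grpd_inv (FF (Us i)) (f i)) = fst t i \<and>
     Cod (FF (Us i)) (grpd_inv (FF (Us i)) (f i)) = fst s i" if i: "i < n" for i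
    using is_inverseD(1)[OF iv[OF i]] is_inverseD(2)[OF iv[OF i]] is_inverseD(3)[OF iv[OF i]] E(4) i by simp
  have in_Pi: "(\<lambda>i\<in>{..<n}. grpd_inv (FF (Us i)) (f i)) \<in> PiE {..<n} (\<lambda>i. Arr (FF (Us i)))"
    using iv2 by (simp add: restrict_PiE_iff)
  have compat: "Comp (FF (Us i \<inter> Us j)) (snd s i j) (resA (Us i \<inter> Us j) (Us i) ((\<lambda>i\<in>{..<n}. grpd_inv (FF (Us i)) (f i)) i))
       = Comp (FF (Us i \<inter> Us j)) (resA (Us i \<inter> Us j) (Us j) ((\<lambda>i\<in>{..<n}. grpd_inv (FF (Us i)) (f i)) j)) (snd t i j)"
    if i: "i < n" and j: "j < n" for i j
  proof -
    let ?A = "Us i \<inter> Us j"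
    have OA: "openin X ?A" and OI: "openin X (Us i)" and OJ: "openin X (Us j)" using Us_open i j by auto
    have sA: "?A \<subseteq> Us i" "?A \<subseteq> Us j" by auto
    note F1 = restriction_functor[OF OA OI sA(1)] and F2 = restriction_functor[OF OA OJ sA(2)]
    have fi: "f i \<in> Arr (FF (Us i))" "Dom (FF (Us i)) (f i) = fst s i" "Cod (FF (Us i)) (f i) = fst t i" using E(4) i by auto
    have fj: "f j \<in> Arr (FF (Us j))" "Dom (FF (Us j)) (f j) = fst s j" "Cod (FF (Us j)) (f j) = fst t j" using E(4) j by auto
    note so = descent_objD[OF E(1) i j] and to = descent_objD[OF E(2) i j]
    have a: "is_inverse (FF ?A) (resA ?A (Us i) (f i)) (resA ?A (Us i) (grpd_inv (FF (Us i)) (f i)))"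
      using functor_preserves_inverse[OF F1 category_FF[OF OI] fi(1) iv[OF i]] .
    have b: "is_inverse (FF ?A) (resA ?A (Us j) (f j)) (resA ?A (Us j) (grpd_inv (FF (Us j)) (f j)))"
      using functor_preserves_inverse[OF F2 category_FF[OF OJ] fj(1) iv[OF j]] .
    have "Comp (FF ?A) (snd s i j) (resA ?A (Us i) (grpd_inv (FF (Us i)) (f i))) =
          Comp (FF ?A) (resA ?A (Us j) (grpd_inv (FF (Us j)) (f j))) (snd t i j)"
      by (rule cat_commuting_square_inverse[OF category_FF[OF OA] a b]) (use fi fj so to OA OI OJ descent_arrD(7)[OF e i j] in simp_all)
    thus ?thesis using i j by simp
  qed
  have e': "(t, s, \<lambda>i\<in>{..<n}. grpd_inv (FF (Us i)) (f i)) \<in> Arr (Desc n Us)"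
    unfolding descent_arr_iff using E(1) E(2) in_Pi compat iv2 by simp
  have left_inv: "(\<lambda>i\<in>{..<n}. Comp (FF (Us i)) ((\<lambda>i\<in>{..<n}. grpd_inv (FF (Us i)) (f i)) i) (f i)) = (\<lambda>i\<in>{..<n}. Ide (FF (Us i)) (fst s i))"
    by (rule restrict_ext) (use iv E(4) in \<open>simp add: is_inverseD(4)\<close>)
  have right_inv: "(\<lambda>i\<in>{..<n}. Comp (FF (Us i)) (f i) ((\<lambda>i\<in>{..<n}. grpd_inv (FF (Us i)) (f i)) i)) = (\<lambda>i\<in>{..<n}. Ide (FF (Us i)) (fst t i))"
    by (rule restrict_ext) (use iv E(4) in \<open>simp add: is_inverseD(5)\<close>)
  show ?thesis unfolding is_inverse_def using e' left_inv right_inv by simp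
qed

lemma descent_cat_groupoid: "is_groupoid (Desc n Us)"
proof -
  have dom_cod: "\<forall>f\<in>Arr (Desc n Us). Dom (Desc n Us) f \<in> Obj (Desc n Us) \<and> Cod (Desc n Us) f \<in> Obj (Desc n Us)"
  proof
    fix e assume e: "e \<in> Arr (Desc n Us)"
    obtain s t f where ee: "e = (s,t,f)" by (cases e)
    show "Dom (Desc n Us) e \<in> Obj (Desc n Us) \<and> Cod (Desc n Us) e \<in> Obj (Desc n Us)"
      using descent_arr_family[OF e[unfolded ee]] ee by simp
  qed
  have ide: "\<forall>a\<in>Obj (Desc n Us). Ide (Desc n Us) a \<in> Arr (Desc n Us) \<and> Dom (Desc n Us) (Ide (Desc n Us) a) = a \<and> Cod (Desc n Us) (Ide (Desc n Us) a) = a"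
    using descent_Ide_in_Arr by simp
  have comp: "\<forall>f\<in>Arr (Desc n Us). \<forall>g\<in>Arr (Desc n Us). Cod (Desc n Us) f = Dom (Desc n Us) g \<longrightarrow>
        Comp (Desc n Us) g f \<in> Arr (Desc n Us) \<and> Dom (Desc n Us) (Comp (Desc n Us) g f) = Dom (Desc n Us) f \<and> Cod (Desc n Us) (Comp (Desc n Us) g f) = Cod (Desc n Us) g"
  proof (intro ballI impI)
    fix e1 e2 assume e1: "e1 \<in> Arr (Desc n Us)" and e2: "e2 \<in> Arr (Desc n Us)" and c: "Cod (Desc n Us) e1 = Dom (Desc n Us) e2"
    obtain s t f where ee1: "e1 = (s,t,f)" by (cases e1)
    obtain t' u g where ee2: "e2 = (t',u,g)" by (cases e2)
    have tt: "t' = t" using c ee1 ee2 by simp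
    show "Comp (Desc n Us) e2 e1 \<in> Arr (Desc n Us) \<and> Dom (Desc n Us) (Comp (Desc n Us) e2 e1) = Dom (Desc n Us) e1 \<and> Cod (Desc n Us) (Comp (Desc n Us) e2 e1) = Cod (Desc n Us) e2"
      using descent_Comp_in_Arr[OF e1[unfolded ee1] e2[unfolded ee2 tt]] ee1 ee2 tt by simp
  qed
  have unit: "\<forall>f\<in>Arr (Desc n Us). Comp (Desc n Us) (Ide (Desc n Us) (Cod (Desc n Us) f)) f = f \<and> Comp (Desc n Us) f (Ide (Desc n Us) (Dom (Desc n Us) f)) = f"
    using descent_Comp_Ide_left descent_Comp_Ide_right by blast
  have assoc: "\<forall>f\<in>Arr (Desc n Us). \<forall>g\<in>Arr (Desc n Us). \<forall>h\<in>Arr (Desc n Us). Cod (Desc n Us) f = Dom (Desc n Us) g \<longrightarrow> Cod (Desc n Us) g = Dom (Desc n Us) h \<longrightarrow>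
        Comp (Desc n Us) h (Comp (Desc n Us) g f) = Comp (Desc n Us) (Comp (Desc n Us) h g) f"
    using descent_Comp_assoc by blast
  have inverses: "\<forall>f\<in>Arr (Desc n Us). \<exists>g. is_inverse (Desc n Us) f g"
  proof
    fix e assume e: "e \<in> Arr (Desc n Us)"
    obtain s t f where ee: "e = (s,t,f)" by (cases e)
    show "\<exists>g. is_inverse (Desc n Us) e g" using descent_inverse[OF e[unfolded ee]] ee by blast
  qed
  show ?thesis unfolding is_groupoid_def is_category_def by (intro conjI dom_cod ide comp unit assoc inverses)
qed

end

abbreviation "Fdesc n U Us \<equiv> descent_functor_obj FF resO n U Us"
abbreviation "Fdesc_arr n U Us \<equiv> (\<lambda>f. (descent_functor_obj FF resO n U Us (Dom (FF U) f),
                descent_functor_obj FF resO n U Us (Cod (FF U) f),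
                (\<lambda>i\<in>{..<n}. resA (Us i) U f)))"

lemma descent_functor_obj_fst[simp]: "fst (Fdesc n U Us x) = (\<lambda>i\<in>{..<n}. resO (Us i) U x)"
  by (simp add: descent_functor_obj_def)
lemma descent_functor_obj_snd[simp]: "snd (Fdesc n U Us x) = (\<lambda>i\<in>{..<n}. \<lambda>j\<in>{..<n}.
         Ide (FF (Us i \<inter> Us j)) (resO (Us i \<inter> Us j) (Us i) (resO (Us i) U x)))"
  by (simp add: descent_functor_obj_def)

context
  fixes n U Us
  assumes cover: "open_cover X U n Us"
begin

lemma descent_functor_arr_compat_iff:
  assumes h: "\<And>i. i < n \<Longrightarrow> h i \<in> Arr (FF (Us i)) \<and> Dom (FF (Us i)) (h i) = resO (Us i) U a \<and> Cod (FF (Us i)) (h i) = resO (Us i) U a'"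
    and a: "a \<in> Obj (FF U)" and a': "a' \<in> Obj (FF U)" and i: "i < n" and j: "j < n"
  shows "Comp (FF (Us i \<inter> Us j)) (snd (Fdesc n U Us a') i j) (resA (Us i \<inter> Us j) (Us i) (h i))
       = Comp (FF (Us i \<inter> Us j)) (resA (Us i \<inter> Us j) (Us j) (h j)) (snd (Fdesc n U Us a) i j)
     \<longleftrightarrow> resA (Us i \<inter> Us j) (Us i) (h i) = resA (Us i \<inter> Us j) (Us j) (h j)"
  using h[OF i] h[OF j] a a' i j open_coverD[OF cover] by simp

lemma descent_functor_obj_in: assumes x: "x \<in> Obj (FF U)" shows "Fdesc n U Us x \<in> DObj n Us"
proof -
  have objs: "(\<lambda>i\<in>{..<n}. resO (Us i) U x) \<in> PiE {..<n} (\<lambda>i. Obj (FF (Us i)))"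
    using x open_coverD[OF cover] by (simp add: restrict_PiE_iff)
  have arrs: "(\<lambda>i\<in>{..<n}. \<lambda>j\<in>{..<n}. Ide (FF (Us i \<inter> Us j)) (resO (Us i \<inter> Us j) (Us i) (resO (Us i) U x)))
      \<in> PiE {..<n} (\<lambda>i. PiE {..<n} (\<lambda>j. Arr (FF (Us i \<inter> Us j))))"
    using x open_coverD[OF cover] by (simp add: restrict_PiE_iff)
  have dom_cod: "Dom (FF (Us i \<inter> Us j)) (Ide (FF (Us i \<inter> Us j)) (resO (Us i \<inter> Us j) (Us i) (resO (Us i) U x))) = resO (Us i \<inter> Us j) (Us i) (resO (Us i) U x) \<and>
           Cod (FF (Us i \<inter> Us j)) (Ide (FF (Us i \<inter> Us j)) (resO (Us i \<inter> Us j) (Us i) (resO (Us i) U x))) = resO (Us i \<inter> Us j) (Us j) (resO (Us j) U x)"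
    if i: "i < n" and j: "j < n" for i j
    using x open_coverD[OF cover] i j by simp
  have cocycle: "Comp (FF (Us i \<inter> Us j \<inter> Us k))
             (resA (Us i \<inter> Us j \<inter> Us k) (Us j \<inter> Us k) (Ide (FF (Us j \<inter> Us k)) (resO (Us j \<inter> Us k) (Us j) (resO (Us j) U x))))
             (resA (Us i \<inter> Us j \<inter> Us k) (Us i \<inter> Us j) (Ide (FF (Us i \<inter> Us j)) (resO (Us i \<inter> Us j) (Us i) (resO (Us i) U x))))
           = resA (Us i \<inter> Us j \<inter> Us k) (Us i \<inter> Us k) (Ide (FF (Us i \<inter> Us k)) (resO (Us i \<inter> Us k) (Us i) (resO (Us i) U x)))"
    if i: "i < n" and j: "j < n" and k: "k < n" for i j k
    using x open_coverD[OF cover] i j k by simp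
  have "(fst (Fdesc n U Us x), snd (Fdesc n U Us x)) \<in> DObj n Us"
    unfolding descent_obj_iff descent_functor_obj_fst descent_functor_obj_snd using objs arrs dom_cod cocycle by simp
  then show ?thesis by (simp only: prod.collapse)
qed

lemma descent_functor: "is_functor (FF U) (Desc n Us) (Fdesc n U Us) (Fdesc_arr n U Us)"
proof -
  have a: "Fdesc_arr n U Us f \<in> Arr (Desc n Us)" if f: "f \<in> Arr (FF U)" for f
  proof -
    have d: "Dom (FF U) f \<in> Obj (FF U)" "Cod (FF U) f \<in> Obj (FF U)" using f open_coverD(1)[OF cover] by auto
    have h: "\<And>i. i < n \<Longrightarrow> resA (Us i) U f \<in> Arr (FF (Us i)) \<and> Dom (FF (Us i)) (resA (Us i) U f) = resO (Us i) U (Dom (FF U) f) \<and>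
        Cod (FF (Us i)) (resA (Us i) U f) = resO (Us i) U (Cod (FF U) f)"
      using f open_coverD[OF cover] by simp
    have compat: "Comp (FF (Us i \<inter> Us j)) (snd (Fdesc n U Us (Cod (FF U) f)) i j) (resA (Us i \<inter> Us j) (Us i) ((\<lambda>i\<in>{..<n}. resA (Us i) U f) i))
       = Comp (FF (Us i \<inter> Us j)) (resA (Us i \<inter> Us j) (Us j) ((\<lambda>i\<in>{..<n}. resA (Us i) U f) j)) (snd (Fdesc n U Us (Dom (FF U) f)) i j)"
      if i: "i < n" and j: "j < n" for i j
    proof -
      have "resA (Us i \<inter> Us j) (Us i) (resA (Us i) U f) = resA (Us i \<inter> Us j) (Us j) (resA (Us j) U f)"
        using f open_coverD[OF cover] i j by simp
      thus ?thesis using descent_functor_arr_compat_iff[OF h d i j] i j by simp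
    qed
    have in_Pi: "(\<lambda>i\<in>{..<n}. resA (Us i) U f) \<in> PiE {..<n} (\<lambda>i. Arr (FF (Us i)))"
      using h by (simp add: restrict_PiE_iff)
    show ?thesis unfolding descent_arr_iff using descent_functor_obj_in d in_Pi compat h by simp
  qed
  have i: "Fdesc_arr n U Us (Ide (FF U) x) = Ide (Desc n Us) (Fdesc n U Us x)" if x: "x \<in> Obj (FF U)" for x
  proof -
    have "(\<lambda>i\<in>{..<n}. resA (Us i) U (Ide (FF U) x)) = (\<lambda>i\<in>{..<n}. Ide (FF (Us i)) (fst (Fdesc n U Us x) i))"
      by (rule restrict_ext) (use x open_coverD(1)[OF cover] open_coverD(2)[OF cover] open_coverD(3)[OF cover] in simp)
    thus ?thesis using x open_coverD(1)[OF cover] by simp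
  qed
  have cp: "Fdesc_arr n U Us (Comp (FF U) g f) = Comp (Desc n Us) (Fdesc_arr n U Us g) (Fdesc_arr n U Us f)"
    if f: "f \<in> Arr (FF U)" and g: "g \<in> Arr (FF U)" and fg: "Cod (FF U) f = Dom (FF U) g" for f g
  proof -
    have "(\<lambda>i\<in>{..<n}. resA (Us i) U (Comp (FF U) g f)) = (\<lambda>i\<in>{..<n}. Comp (FF (Us i)) ((\<lambda>i\<in>{..<n}. resA (Us i) U g) i) ((\<lambda>i\<in>{..<n}. resA (Us i) U f) i))"
      by (rule restrict_ext) (use f g fg open_coverD(1)[OF cover] open_coverD(2)[OF cover] open_coverD(3)[OF cover] in simp)
    thus ?thesis using f g fg open_coverD(1)[OF cover] by simp
  qed
  show ?thesis unfolding is_functor_def using descent_functor_obj_in a i cp by simp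
qed

end

end

section \<open>The condition \<open>st(n)\<close>\<close>

context groupoid_presheaf
begin

definition hom_sections :: "'a set \<Rightarrow> 'o \<Rightarrow> 'o \<Rightarrow> 'a set \<Rightarrow> 'm set" where
  "hom_sections U x y V = {f \<in> Arr (FF V). Dom (FF V) f = resO V U x \<and> Cod (FF V) f = resO V U y}"

definition homs_glue :: "nat \<Rightarrow> 'a set \<Rightarrow> (nat \<Rightarrow> 'a set) \<Rightarrow> bool" where
  "homs_glue n U Us \<longleftrightarrow> (\<forall>x\<in>Obj (FF U). \<forall>y\<in>Obj (FF U). sheaf_cond_for (hom_sections U x y) resA U n Us)"

definition effective_descent :: "nat \<Rightarrow> 'a set \<Rightarrow> (nat \<Rightarrow> 'a set) \<Rightarrow> bool" where
  "effective_descent n U Us \<longleftrightarrow> (\<forall>s\<in>DObj n Us. \<exists>a\<in>Obj (FF U). \<exists>g.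
     (\<forall>i<n. g i \<in> Arr (FF (Us i)) \<and> Dom (FF (Us i)) (g i) = resO (Us i) U a \<and> Cod (FF (Us i)) (g i) = fst s i) \<and>
     (\<forall>i<n. \<forall>j<n. Comp (FF (Us i \<inter> Us j)) (snd s i j) (resA (Us i \<inter> Us j) (Us i) (g i))
        = resA (Us i \<inter> Us j) (Us j) (g j)))"

lemma hom_sections_self:
  "openin X U \<Longrightarrow> x \<in> Obj (FF U) \<Longrightarrow> y \<in> Obj (FF U) \<Longrightarrow>
   hom_sections U x y U = {f \<in> Arr (FF U). Dom (FF U) f = x \<and> Cod (FF U) f = y}"
  unfolding hom_sections_def by simp

context
  fixes n U Us
  assumes cover: "open_cover X U n Us"
begin

lemma homs_glue_if_faithful_full:
  assumes faithful: "faithful (FF U) (Fdesc_arr n U Us)"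
    and full: "full (FF U) (Desc n Us) (Fdesc n U Us) (Fdesc_arr n U Us)"
  shows "homs_glue n U Us"
  unfolding homs_glue_def sheaf_cond_for_def
proof (intro ballI conjI allI impI)
  fix x y assume x: "x \<in> Obj (FF U)" and y: "y \<in> Obj (FF U)"
  note self = hom_sections_self[OF open_coverD(1)[OF cover] x y]
  show "f = f'" if f: "f \<in> hom_sections U x y U" and f': "f' \<in> hom_sections U x y U"
    and agree: "\<forall>i<n. resA (Us i) U f = resA (Us i) U f'" for f f'
  proof (rule faithfulD[OF faithful])
    show "Fdesc_arr n U Us f = Fdesc_arr n U Us f'"
      using f f' agree unfolding self by (auto simp: restrict_eq_iff)
  qed (use f f' in \<open>simp_all add: self\<close>)
  fix h assume h: "\<forall>i<n. h i \<in> hom_sections U x y (Us i)"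
    and compat: "\<forall>i<n. \<forall>j<n. resA (Us i \<inter> Us j) (Us i) (h i) = resA (Us i \<inter> Us j) (Us j) (h j)"
  have hom: "h i \<in> Arr (FF (Us i)) \<and> Dom (FF (Us i)) (h i) = resO (Us i) U x \<and> Cod (FF (Us i)) (h i) = resO (Us i) U y"
    if "i < n" for i
    using h that unfolding hom_sections_def by blast
  have descent_compat:
    "Comp (FF (Us i \<inter> Us j)) (snd (Fdesc n U Us y) i j) (resA (Us i \<inter> Us j) (Us i) (restrict h {..<n} i)) =
     Comp (FF (Us i \<inter> Us j)) (resA (Us i \<inter> Us j) (Us j) (restrict h {..<n} j)) (snd (Fdesc n U Us x) i j)"
    if i: "i < n" and j: "j < n" for i j
    using descent_functor_arr_compat_iff[OF cover hom x y i j] compat[rule_format, OF i j] i j by simp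
  have "(Fdesc n U Us x, Fdesc n U Us y, restrict h {..<n}) \<in> Arr (Desc n Us)"
    unfolding descent_arr_iff
    using descent_functor_obj_in[OF cover x] descent_functor_obj_in[OF cover y] descent_compat hom
    by (simp add: restrict_PiE_iff)
  then obtain f where f: "f \<in> Arr (FF U)" "Dom (FF U) f = x" "Cod (FF U) f = y"
    and eq: "Fdesc_arr n U Us f = (Fdesc n U Us x, Fdesc n U Us y, restrict h {..<n})"
    using full x y unfolding full_def by fastforce
  from eq have "\<forall>i<n. resA (Us i) U f = h i" by (simp add: restrict_eq_iff)
  then show "\<exists>f\<in>hom_sections U x y U. \<forall>i<n. resA (Us i) U f = h i" using f self by blast
qed

lemma homs_glueD:
  assumes "homs_glue n U Us" "x \<in> Obj (FF U)" "y \<in> Obj (FF U)"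
  shows "sheaf_cond_for (hom_sections U x y) resA U n Us"
    and "hom_sections U x y U = {f \<in> Arr (FF U). Dom (FF U) f = x \<and> Cod (FF U) f = y}"
  using assms hom_sections_self[OF open_coverD(1)[OF cover]] unfolding homs_glue_def by blast+

lemma faithful_if_homs_glue:
  assumes homs: "homs_glue n U Us"
  shows "faithful (FF U) (Fdesc_arr n U Us)"
  unfolding faithful_def
proof (intro ballI impI)
  fix f f' assume f: "f \<in> Arr (FF U)" and f': "f' \<in> Arr (FF U)"
    and dom: "Dom (FF U) f = Dom (FF U) f'" and cod: "Cod (FF U) f = Cod (FF U) f'"
    and eq: "Fdesc_arr n U Us f = Fdesc_arr n U Us f'"
  have x: "Dom (FF U) f \<in> Obj (FF U)" and y: "Cod (FF U) f \<in> Obj (FF U)" using f open_coverD(1)[OF cover] by auto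
  show "f = f'"
  proof (rule sheaf_cond_for_separated[OF homs_glueD(1)[OF homs x y]])
    show "resA (Us i) U f = resA (Us i) U f'" if "i < n" for i
      using eq that by (simp add: restrict_eq_iff)
  qed (use f f' dom cod homs_glueD(2)[OF homs x y] in auto)
qed

lemma full_if_homs_glue:
  assumes homs: "homs_glue n U Us"
  shows "full (FF U) (Desc n Us) (Fdesc n U Us) (Fdesc_arr n U Us)"
  unfolding full_def
proof (intro ballI impI)
  fix a a' e assume a: "a \<in> Obj (FF U)" and a': "a' \<in> Obj (FF U)" and e: "e \<in> Arr (Desc n Us)"
    and e_dom: "Dom (Desc n Us) e = Fdesc n U Us a" and e_cod: "Cod (Desc n Us) e = Fdesc n U Us a'"
  obtain h where e_eq: "e = (Fdesc n U Us a, Fdesc n U Us a', h)"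
    using e_dom e_cod by (cases e) simp
  note E = descent_arr_family[where n = n and Us = Us, OF open_coverD(2)[OF cover] e[unfolded e_eq]]
  have hom: "h i \<in> Arr (FF (Us i)) \<and> Dom (FF (Us i)) (h i) = resO (Us i) U a \<and> Cod (FF (Us i)) (h i) = resO (Us i) U a'"
    if "i < n" for i
    using E(4) that by simp
  have compat: "resA (Us i \<inter> Us j) (Us i) (h i) = resA (Us i \<inter> Us j) (Us j) (h j)" if "i < n" "j < n" for i j
    using descent_functor_arr_compat_iff[OF cover hom a a' that] descent_arrD(7)[OF e[unfolded e_eq] that] by blast
  obtain f where f: "f \<in> hom_sections U a a' U" and rf: "\<forall>i<n. resA (Us i) U f = h i"
    using sheaf_cond_for_glue[OF homs_glueD(1)[OF homs a a'], of h] hom compat unfolding hom_sections_def by blast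
  have "restrict (\<lambda>i. resA (Us i) U f) {..<n} = restrict h {..<n}"
    using rf by (auto simp: restrict_eq_iff)
  also have "\<dots> = h" using E(3) by (rule PiE_restrict)
  finally show "\<exists>f\<in>Arr (FF U). Dom (FF U) f = a \<and> Cod (FF U) f = a' \<and> Fdesc_arr n U Us f = e"
    using f homs_glueD(2)[OF homs a a'] e_eq by auto
qed

lemma effective_descent_if_ess_surj:
  assumes ess_surj: "ess_surj (FF U) (Desc n Us) (Fdesc n U Us)"
  shows "effective_descent n U Us"
  unfolding effective_descent_def
proof
  note U = open_coverD[OF cover]
  fix s assume s: "s \<in> DObj n Us"
  obtain a e where a: "a \<in> Obj (FF U)" and e: "e \<in> Arr (Desc n Us)"
    and e_dom: "Dom (Desc n Us) e = Fdesc n U Us a" and e_cod: "Cod (Desc n Us) e = s"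
    using ess_surj s unfolding ess_surj_def by auto
  obtain g where e_eq: "e = (Fdesc n U Us a, s, g)" using e_dom e_cod by (cases e) simp
  note E = descent_arr_family[where n = n and Us = Us, OF U(2) e[unfolded e_eq]]
  have g: "\<forall>i<n. g i \<in> Arr (FF (Us i)) \<and> Dom (FF (Us i)) (g i) = resO (Us i) U a \<and> Cod (FF (Us i)) (g i) = fst s i"
    using E(4) by simp
  have "Comp (FF (Us i \<inter> Us j)) (snd s i j) (resA (Us i \<inter> Us j) (Us i) (g i)) = resA (Us i \<inter> Us j) (Us j) (g j)"
    if i: "i < n" and j: "j < n" for i j
  proof -
    have "Comp (FF (Us i \<inter> Us j)) (resA (Us i \<inter> Us j) (Us j) (g j)) (snd (Fdesc n U Us a) i j)
        = resA (Us i \<inter> Us j) (Us j) (g j)"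
      using g a i j U by simp
    then show ?thesis using descent_arrD(7)[OF e[unfolded e_eq] i j] by simp
  qed
  then show "\<exists>a\<in>Obj (FF U). \<exists>g. (\<forall>i<n. g i \<in> Arr (FF (Us i)) \<and> Dom (FF (Us i)) (g i) = resO (Us i) U a \<and>
      Cod (FF (Us i)) (g i) = fst s i) \<and>
    (\<forall>i<n. \<forall>j<n. Comp (FF (Us i \<inter> Us j)) (snd s i j) (resA (Us i \<inter> Us j) (Us i) (g i)) = resA (Us i \<inter> Us j) (Us j) (g j))"
    using a g by blast
qed

lemma ess_surj_if_effective_descent:
  assumes descent: "effective_descent n U Us"
  shows "ess_surj (FF U) (Desc n Us) (Fdesc n U Us)"
  unfolding ess_surj_def
proof
  note U = open_coverD[OF cover]
  fix s assume "s \<in> Obj (Desc n Us)"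
  then have s: "s \<in> DObj n Us" by simp
  then obtain a g where a: "a \<in> Obj (FF U)"
    and g: "\<forall>i<n. g i \<in> Arr (FF (Us i)) \<and> Dom (FF (Us i)) (g i) = resO (Us i) U a \<and> Cod (FF (Us i)) (g i) = fst s i"
    and compat: "\<forall>i<n. \<forall>j<n. Comp (FF (Us i \<inter> Us j)) (snd s i j) (resA (Us i \<inter> Us j) (Us i) (g i))
      = resA (Us i \<inter> Us j) (Us j) (g j)"
    using descent unfolding effective_descent_def by blast
  have "Comp (FF (Us i \<inter> Us j)) (snd s i j) (resA (Us i \<inter> Us j) (Us i) (restrict g {..<n} i)) =
      Comp (FF (Us i \<inter> Us j)) (resA (Us i \<inter> Us j) (Us j) (restrict g {..<n} j)) (snd (Fdesc n U Us a) i j)"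
    if i: "i < n" and j: "j < n" for i j
  proof -
    have "Comp (FF (Us i \<inter> Us j)) (resA (Us i \<inter> Us j) (Us j) (g j)) (snd (Fdesc n U Us a) i j)
        = resA (Us i \<inter> Us j) (Us j) (g j)"
      using g a i j U by simp
    then show ?thesis using compat i j by simp
  qed
  then have "(Fdesc n U Us a, s, restrict g {..<n}) \<in> Arr (Desc n Us)"
    unfolding descent_arr_iff using descent_functor_obj_in[OF cover a] s g by (simp add: restrict_PiE_iff)
  then show "\<exists>a\<in>Obj (FF U). \<exists>e\<in>Arr (Desc n Us). Dom (Desc n Us) e = Fdesc n U Us a \<and> Cod (Desc n Us) e = s"
    using a by force
qed

end

lemma st_cond_iff:
  "st_cond X FF resO resA n \<longleftrightarrow> (\<forall>U Us. open_cover X U n Us \<longrightarrow> homs_glue n U Us \<and> effective_descent n U Us)"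
proof -
  have "is_cat_equiv (FF U) (Desc n Us) (Fdesc n U Us) (Fdesc_arr n U Us) \<longleftrightarrow>
      homs_glue n U Us \<and> effective_descent n U Us"
    if cover: "open_cover X U n Us" for U Us
  proof -
    note U = open_coverD[OF cover]
    have C: "is_groupoid (FF U)" and D: "is_groupoid (Desc n Us)"
      using groupoid_FF[OF U(1)] descent_cat_groupoid[OF U(2)] by simp_all
    show ?thesis
      using cat_equiv_imp_faithful_full_ess_surj[OF is_groupoid_is_category[OF C] is_groupoid_is_category[OF D]]
        cat_equiv_if_faithful_full_ess_surj[OF C D descent_functor[OF cover]]
        homs_glue_if_faithful_full[OF cover] faithful_if_homs_glue[OF cover] full_if_homs_glue[OF cover]
        effective_descent_if_ess_surj[OF cover] ess_surj_if_effective_descent[OF cover]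
      by blast
  qed
  then show ?thesis unfolding st_cond_def by blast
qed

lemma set_presheaf_hom_sections:
  assumes U: "openin X U" and x: "x \<in> Obj (FF U)" and y: "y \<in> Obj (FF U)"
  shows "set_presheaf (\<lambda>V. openin X V \<and> V \<subseteq> U) (hom_sections U x y) resA"
  unfolding set_presheaf_def
proof (intro conjI allI impI ballI)
  fix V W f assume V: "openin X V \<and> V \<subseteq> U" and W: "openin X W \<and> W \<subseteq> U" and VW: "V \<subseteq> W"
    and f: "f \<in> hom_sections U x y W"
  show "resA V W f \<in> hom_sections U x y V" using V W VW f U x y by (simp add: hom_sections_def)
qed (auto simp: hom_sections_def openin_Un)

lemma hom_sections_restrict:
  assumes "openin X U" "openin X V" "openin X W" "W \<subseteq> V" "V \<subseteq> U" "x \<in> Obj (FF U)" "y \<in> Obj (FF U)"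
  shows "hom_sections V (resO V U x) (resO V U y) W = hom_sections U x y W"
  using assms by (simp add: hom_sections_def)

lemma homs_glue_from_2:
  assumes homs2: "\<And>V Vs. open_cover X V 2 Vs \<Longrightarrow> homs_glue 2 V Vs" and n: "2 \<le> n"
    and cover: "open_cover X U n Us"
  shows "homs_glue n U Us"
  unfolding homs_glue_def
proof (intro ballI)
  note U = open_coverD[OF cover]
  fix x y assume x: "x \<in> Obj (FF U)" and y: "y \<in> Obj (FF U)"
  have "sheaf_cond (\<lambda>V. openin X V \<and> V \<subseteq> U) (hom_sections U x y) resA 2"
    unfolding sheaf_cond_def
  proof (intro allI impI)
    fix V and Vs :: "nat \<Rightarrow> 'a set" assume V: "openin X V \<and> V \<subseteq> U" and Vs: "\<forall>i<2. openin X (Vs i) \<and> Vs i \<subseteq> U"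
      and cover_V: "(\<Union>i<2. Vs i) = V"
    have "homs_glue 2 V Vs" using homs2 V Vs cover_V unfolding open_cover_def by blast
    then have sheaf: "sheaf_cond_for (hom_sections V (resO V U x) (resO V U y)) resA V 2 Vs"
      using V U x y unfolding homs_glue_def by simp
    have restrict: "hom_sections V (resO V U x) (resO V U y) W = hom_sections U x y W"
      if "openin X W" "W \<subseteq> V" for W
      using hom_sections_restrict that V U x y by blast
    have "sheaf_cond_for (hom_sections U x y) resA V 2 Vs \<longleftrightarrow>
        sheaf_cond_for (hom_sections V (resO V U x) (resO V U y)) resA V 2 Vs"
      by (rule sheaf_cond_for_cong) (use restrict V Vs cover_V in auto)
    then show "sheaf_cond_for (hom_sections U x y) resA V 2 Vs" using sheaf by blast
  qed
  then have "sheaf_cond (\<lambda>V. openin X V \<and> V \<subseteq> U) (hom_sections U x y) resA n"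
    using sheaf_cond_from_2[OF set_presheaf_hom_sections[OF U(1) x y]] n by blast
  then show "sheaf_cond_for (hom_sections U x y) resA U n Us"
    using U cover unfolding open_cover_def by (blast intro: sheaf_condD)
qed

context
  fixes n :: nat and U V :: "'a set" and Us :: "nat \<Rightarrow> 'a set" and s
  assumes cover: "open_cover X U (Suc n) Us" and V: "V = (\<Union>i<n. Us i)"
    and s: "s \<in> DObj (Suc n) Us"
begin

lemma split_open_cover:
  "openin X V" "open_cover X V n Us" "openin X (Us n)" "\<And>i. i < n \<Longrightarrow> Us i \<subseteq> V" "V \<subseteq> U"
  "\<And>i. i < Suc n \<Longrightarrow> openin X (Us i)" "open_cover X U 2 (fam2 V (Us n))"
  "open_cover X (V \<inter> Us n) n (\<lambda>i. Us i \<inter> Us n)"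
proof -
  note U = open_coverD[OF cover]
  show V_open: "openin X V" unfolding V using U(2) by (intro openin_Union) auto
  show "open_cover X V n Us" unfolding open_cover_def using V_open U(2) V by simp
  show "openin X (Us n)" "\<And>i. i < Suc n \<Longrightarrow> openin X (Us i)" using U(2) by simp_all
  show "\<And>i. i < n \<Longrightarrow> Us i \<subseteq> V" unfolding V by auto
  have UV: "U = V \<union> Us n"
    using cover unfolding open_cover_def V by (simp add: UN_lessThan_Suc_split)
  then show "V \<subseteq> U" by blast
  show "open_cover X U 2 (fam2 V (Us n))"
    unfolding open_cover_def using U(1,2) V_open UV by (simp add: all_less_2 UN_fam2)
  show "open_cover X (V \<inter> Us n) n (\<lambda>i. Us i \<inter> Us n)"
    unfolding open_cover_def using V_open U(2) unfolding V by auto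
qed

context
  fixes y g
  assumes y: "y \<in> Obj (FF V)"
    and g: "\<And>i. i < n \<Longrightarrow> g i \<in> Arr (FF (Us i)) \<and> Dom (FF (Us i)) (g i) = resO (Us i) V y \<and> Cod (FF (Us i)) (g i) = fst s i"
    and g_compat: "\<And>i j. i < n \<Longrightarrow> j < n \<Longrightarrow>
      Comp (FF (Us i \<inter> Us j)) (snd s i j) (resA (Us i \<inter> Us j) (Us i) (g i)) = resA (Us i \<inter> Us j) (Us j) (g j)"
begin

lemma transition_compat:
  assumes i: "i < n" and j: "j < n"
  shows "resA (Us i \<inter> Us j \<inter> Us n) (Us i \<inter> Us n) (Comp (FF (Us i \<inter> Us n)) (snd s i n) (resA (Us i \<inter> Us n) (Us i) (g i)))
    = resA (Us i \<inter> Us j \<inter> Us n) (Us j \<inter> Us n) (Comp (FF (Us j \<inter> Us n)) (snd s j n) (resA (Us j \<inter> Us n) (Us j) (g j)))"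
proof -
  let ?T = "Us i \<inter> Us j \<inter> Us n"
  have ii: "i < Suc n" and jj: "j < Suc n" and nn: "n < Suc n" using i j by auto
  note opens = split_open_cover(6)[OF ii] split_open_cover(6)[OF jj] split_open_cover(3)
  note gi = g[OF i] and gj = g[OF j]
  note pin = descent_objD[OF s ii nn] and pjn = descent_objD[OF s jj nn] and pij = descent_objD[OF s ii jj]
  have gj_T: "resA ?T (Us j) (g j) = Comp (FF ?T) (resA ?T (Us i \<inter> Us j) (snd s i j)) (resA ?T (Us i) (g i))"
  proof -
    have "resA ?T (Us j) (g j) = resA ?T (Us i \<inter> Us j) (resA (Us i \<inter> Us j) (Us j) (g j))"
      using gj opens by simp
    also have "\<dots> = resA ?T (Us i \<inter> Us j) (Comp (FF (Us i \<inter> Us j)) (snd s i j) (resA (Us i \<inter> Us j) (Us i) (g i)))"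
      using g_compat[OF i j] by simp
    also have "\<dots> = Comp (FF ?T) (resA ?T (Us i \<inter> Us j) (snd s i j)) (resA ?T (Us i) (g i))"
      using gi pij opens by simp
    finally show ?thesis .
  qed
  have "resA ?T (Us j \<inter> Us n) (Comp (FF (Us j \<inter> Us n)) (snd s j n) (resA (Us j \<inter> Us n) (Us j) (g j)))
      = Comp (FF ?T) (resA ?T (Us j \<inter> Us n) (snd s j n))
          (Comp (FF ?T) (resA ?T (Us i \<inter> Us j) (snd s i j)) (resA ?T (Us i) (g i)))"
    using gj pjn opens gj_T by simp
  also have "\<dots> = Comp (FF ?T) (Comp (FF ?T) (resA ?T (Us j \<inter> Us n) (snd s j n)) (resA ?T (Us i \<inter> Us j) (snd s i j)))
      (resA ?T (Us i) (g i))"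
    using gi pij pjn opens by (simp add: cat_Comp_assoc)
  also have "\<dots> = Comp (FF ?T) (resA ?T (Us i \<inter> Us n) (snd s i n)) (resA ?T (Us i) (g i))"
    using descent_obj_cocycle[OF s ii jj nn] by simp
  also have "\<dots> = resA ?T (Us i \<inter> Us n) (Comp (FF (Us i \<inter> Us n)) (snd s i n) (resA (Us i \<inter> Us n) (Us i) (g i)))"
    using gi pin opens by simp
  finally show ?thesis by simp
qed

lemma transition_glue:
  assumes homs: "homs_glue n (V \<inter> Us n) (\<lambda>i. Us i \<inter> Us n)"
  obtains psi where "psi \<in> Arr (FF (V \<inter> Us n))" "Dom (FF (V \<inter> Us n)) psi = resO (V \<inter> Us n) V y"
    "Cod (FF (V \<inter> Us n)) psi = resO (V \<inter> Us n) (Us n) (fst s n)"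
    "\<And>i. i < n \<Longrightarrow> resA (Us i \<inter> Us n) (V \<inter> Us n) psi =
       Comp (FF (Us i \<inter> Us n)) (snd s i n) (resA (Us i \<inter> Us n) (Us i) (g i))"
proof -
  define h where "h i = Comp (FF (Us i \<inter> Us n)) (snd s i n) (resA (Us i \<inter> Us n) (Us i) (g i))" for i
  let ?x = "resO (V \<inter> Us n) V y" and ?z = "resO (V \<inter> Us n) (Us n) (fst s n)"
  note opens = split_open_cover(1,3,4,6)
  have x: "?x \<in> Obj (FF (V \<inter> Us n))" and z: "?z \<in> Obj (FF (V \<inter> Us n))"
    using y descent_objD(1)[OF s, of n n] opens by simp_all
  have "sheaf_cond_for (hom_sections (V \<inter> Us n) ?x ?z) resA (V \<inter> Us n) n (\<lambda>i. Us i \<inter> Us n)"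
    using homs x z unfolding homs_glue_def by blast
  moreover have "h i \<in> hom_sections (V \<inter> Us n) ?x ?z (Us i \<inter> Us n)" if i: "i < n" for i
  proof -
    have ii: "i < Suc n" and nn: "n < Suc n" using i by auto
    show ?thesis unfolding h_def hom_sections_def
      using g[OF i] descent_objD[OF s ii nn] opens(2) opens(4)[OF ii] opens(3)[OF i] opens(1) y descent_objD(1)[OF s nn nn]
      by simp
  qed
  moreover have "resA ((Us i \<inter> Us n) \<inter> (Us j \<inter> Us n)) (Us i \<inter> Us n) (h i) =
      resA ((Us i \<inter> Us n) \<inter> (Us j \<inter> Us n)) (Us j \<inter> Us n) (h j)" if "i < n" "j < n" for i j
  proof -
    have "(Us i \<inter> Us n) \<inter> (Us j \<inter> Us n) = Us i \<inter> Us j \<inter> Us n" by blast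
    then show ?thesis unfolding h_def using transition_compat[OF that] by simp
  qed
  ultimately obtain psi where "psi \<in> hom_sections (V \<inter> Us n) ?x ?z (V \<inter> Us n)"
    and "\<forall>i<n. resA (Us i \<inter> Us n) (V \<inter> Us n) psi = h i"
    using sheaf_cond_for_glue[of _ _ _ n _ h] by blast
  then show thesis
    using that x z opens unfolding h_def hom_sections_self[OF openin_Int[OF opens(1,2)] x z] by blast
qed

context
  fixes psi a G0 G1 gg
  assumes psi: "psi \<in> Arr (FF (V \<inter> Us n))" "Dom (FF (V \<inter> Us n)) psi = resO (V \<inter> Us n) V y"
      "Cod (FF (V \<inter> Us n)) psi = resO (V \<inter> Us n) (Us n) (fst s n)"
    and psi_restrict: "\<And>i. i < n \<Longrightarrow> resA (Us i \<inter> Us n) (V \<inter> Us n) psi =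
       Comp (FF (Us i \<inter> Us n)) (snd s i n) (resA (Us i \<inter> Us n) (Us i) (g i))"
    and a: "a \<in> Obj (FF U)"
    and G0: "G0 \<in> Arr (FF V)" "Dom (FF V) G0 = resO V U a" "Cod (FF V) G0 = y"
    and G1: "G1 \<in> Arr (FF (Us n))" "Dom (FF (Us n)) G1 = resO (Us n) U a" "Cod (FF (Us n)) G1 = fst s n"
    and G_compat: "Comp (FF (V \<inter> Us n)) psi (resA (V \<inter> Us n) V G0) = resA (V \<inter> Us n) (Us n) G1"
    and gg: "\<And>i. gg i = (if i < n then Comp (FF (Us i)) (g i) (resA (Us i) V G0) else G1)"
begin

lemma glued_arr:
  assumes i: "i < Suc n"
  shows "gg i \<in> Arr (FF (Us i)) \<and> Dom (FF (Us i)) (gg i) = resO (Us i) U a \<and> Cod (FF (Us i)) (gg i) = fst s i"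
proof (cases "i < n")
  case True
  then show ?thesis
    using gg g[OF True] G0 split_open_cover(1,5) split_open_cover(6)[OF i] split_open_cover(4)[OF True]
      open_coverD(1)[OF cover] a by simp
next
  case False
  with i have "i = n" by simp
  then show ?thesis using gg G1 by simp
qed

lemma glued_compat_lower:
  assumes i: "i < n" and j: "j < n"
  shows "Comp (FF (Us i \<inter> Us j)) (snd s i j) (resA (Us i \<inter> Us j) (Us i) (gg i)) = resA (Us i \<inter> Us j) (Us j) (gg j)"
proof -
  let ?A = "Us i \<inter> Us j"
  have ii: "i < Suc n" and jj: "j < Suc n" using i j by auto
  note opens = split_open_cover(1) split_open_cover(6)[OF ii] split_open_cover(6)[OF jj]
    split_open_cover(4)[OF i] split_open_cover(4)[OF j]
  note gi = g[OF i] and gj = g[OF j] and pij = descent_objD[OF s ii jj]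
  have "Comp (FF ?A) (snd s i j) (resA ?A (Us i) (gg i)) =
      Comp (FF ?A) (snd s i j) (Comp (FF ?A) (resA ?A (Us i) (g i)) (resA ?A V G0))"
    using gg i gi G0 opens by simp
  also have "\<dots> = Comp (FF ?A) (Comp (FF ?A) (snd s i j) (resA ?A (Us i) (g i))) (resA ?A V G0)"
    using gi G0 pij opens y by (simp add: cat_Comp_assoc)
  also have "\<dots> = Comp (FF ?A) (resA ?A (Us j) (g j)) (resA ?A V G0)" using g_compat[OF i j] by simp
  also have "\<dots> = resA ?A (Us j) (gg j)" using gg j gj G0 opens by simp
  finally show ?thesis .
qed

lemma glued_compat_last:
  assumes i: "i < n"
  shows "Comp (FF (Us i \<inter> Us n)) (snd s i n) (resA (Us i \<inter> Us n) (Us i) (gg i)) = resA (Us i \<inter> Us n) (Us n) (gg n)"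
proof -
  let ?A = "Us i \<inter> Us n"
  have ii: "i < Suc n" and nn: "n < Suc n" using i by auto
  note opens = split_open_cover(1,3) split_open_cover(6)[OF ii] split_open_cover(4)[OF i]
  have sub: "?A \<subseteq> V \<inter> Us n" using opens(4) by auto
  note gi = g[OF i] and pin = descent_objD[OF s ii nn]
  have "Comp (FF ?A) (snd s i n) (resA ?A (Us i) (gg i))
      = Comp (FF ?A) (snd s i n) (Comp (FF ?A) (resA ?A (Us i) (g i)) (resA ?A V G0))"
    using gg i gi G0 opens by simp
  also have "\<dots> = Comp (FF ?A) (resA ?A (V \<inter> Us n) psi) (resA ?A V G0)"
    using psi_restrict[OF i] gi G0 pin opens y by (simp add: cat_Comp_assoc)
  also have "\<dots> = Comp (FF ?A) (resA ?A (V \<inter> Us n) psi) (resA ?A (V \<inter> Us n) (resA (V \<inter> Us n) V G0))"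
    using G0 opens sub by simp
  also have "\<dots> = resA ?A (V \<inter> Us n) (Comp (FF (V \<inter> Us n)) psi (resA (V \<inter> Us n) V G0))"
    using psi G0 opens sub by simp
  also have "\<dots> = resA ?A (Us n) (gg n)" using G_compat G1 gg opens sub by simp
  finally show ?thesis .
qed

lemma glued_compat_first:
  assumes j: "j < n"
  shows "Comp (FF (Us n \<inter> Us j)) (snd s n j) (resA (Us n \<inter> Us j) (Us n) (gg n)) = resA (Us n \<inter> Us j) (Us j) (gg j)"
proof -
  let ?A = "Us j \<inter> Us n"
  have jj: "j < Suc n" and nn: "n < Suc n" using j by auto
  have swap: "Us n \<inter> Us j = ?A" by blast
  note opens = split_open_cover(3) split_open_cover(6)[OF jj]
  have pnj: "snd s n j \<in> Arr (FF ?A)" "Dom (FF ?A) (snd s n j) = resO ?A (Us n) (fst s n)"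
    using descent_objD[OF s nn jj] unfolding swap by simp_all
  note pjn = descent_objD[OF s jj nn] and ggj = glued_arr[OF jj]
  have "Comp (FF ?A) (snd s n j) (resA ?A (Us n) (gg n))
      = Comp (FF ?A) (snd s n j) (Comp (FF ?A) (snd s j n) (resA ?A (Us j) (gg j)))"
    using glued_compat_last[OF j] by simp
  also have "\<dots> = Comp (FF ?A) (Comp (FF ?A) (snd s n j) (snd s j n)) (resA ?A (Us j) (gg j))"
    using pnj pjn ggj opens by (simp add: cat_Comp_assoc)
  also have "\<dots> = resA ?A (Us j) (gg j)"
    using descent_obj_swap_inverse[OF s jj nn opens(2,1)] ggj opens by simp
  finally show ?thesis unfolding swap .
qed

lemma glued_compat:
  assumes i: "i < Suc n" and j: "j < Suc n"
  shows "Comp (FF (Us i \<inter> Us j)) (snd s i j) (resA (Us i \<inter> Us j) (Us i) (gg i)) = resA (Us i \<inter> Us j) (Us j) (gg j)"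
proof -
  consider "i < n" "j < n" | "i < n" "j = n" | "i = n" "j < n" | "i = n" "j = n" using i j by linarith
  then show ?thesis
  proof cases
    case 4
    then show ?thesis using descent_obj_diag[OF s i] split_open_cover(3) glued_arr[OF i] by simp
  qed (use glued_compat_lower glued_compat_last glued_compat_first in simp_all)
qed

end

end

lemma effective_descent_Suc_obj:
  assumes homs_n: "\<And>W Ws. open_cover X W n Ws \<Longrightarrow> homs_glue n W Ws"
    and descent_2: "\<And>W Ws. open_cover X W 2 Ws \<Longrightarrow> effective_descent 2 W Ws"
    and descent_n: "\<And>W Ws. open_cover X W n Ws \<Longrightarrow> effective_descent n W Ws"
  shows "\<exists>a\<in>Obj (FF U). \<exists>gg.
    (\<forall>i<Suc n. gg i \<in> Arr (FF (Us i)) \<and> Dom (FF (Us i)) (gg i) = resO (Us i) U a \<and> Cod (FF (Us i)) (gg i) = fst s i) \<and>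
    (\<forall>i<Suc n. \<forall>j<Suc n. Comp (FF (Us i \<inter> Us j)) (snd s i j) (resA (Us i \<inter> Us j) (Us i) (gg i))
      = resA (Us i \<inter> Us j) (Us j) (gg j))"
proof -
  note opens = split_open_cover(1,3)
  obtain y g where y: "y \<in> Obj (FF V)"
    and g: "\<And>i. i < n \<Longrightarrow> g i \<in> Arr (FF (Us i)) \<and> Dom (FF (Us i)) (g i) = resO (Us i) V y \<and> Cod (FF (Us i)) (g i) = fst s i"
    and g_compat: "\<And>i j. i < n \<Longrightarrow> j < n \<Longrightarrow>
      Comp (FF (Us i \<inter> Us j)) (snd s i j) (resA (Us i \<inter> Us j) (Us i) (g i)) = resA (Us i \<inter> Us j) (Us j) (g j)"
    using descent_n[OF split_open_cover(2)] descent_obj_truncate[OF s, of n]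
    unfolding effective_descent_def by fastforce
  obtain psi where psi: "psi \<in> Arr (FF (V \<inter> Us n))" "Dom (FF (V \<inter> Us n)) psi = resO (V \<inter> Us n) V y"
      "Cod (FF (V \<inter> Us n)) psi = resO (V \<inter> Us n) (Us n) (fst s n)"
    and psi_restrict: "\<And>i. i < n \<Longrightarrow> resA (Us i \<inter> Us n) (V \<inter> Us n) psi =
       Comp (FF (Us i \<inter> Us n)) (snd s i n) (resA (Us i \<inter> Us n) (Us i) (g i))"
    using transition_glue[OF y g g_compat homs_n[OF split_open_cover(8)]] by blast
  have xn: "fst s n \<in> Obj (FF (Us n))" using descent_objD(1)[OF s, of n n] by simp
  obtain a G where a: "a \<in> Obj (FF U)"
    and G: "\<forall>i<2. G i \<in> Arr (FF (fam2 V (Us n) i)) \<and> Dom (FF (fam2 V (Us n) i)) (G i) = resO (fam2 V (Us n) i) U a \<and>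
      Cod (FF (fam2 V (Us n) i)) (G i) = restrict (fam2 y (fst s n)) {..<2} i"
    and G_compat: "\<forall>i<2. \<forall>j<2. Comp (FF (fam2 V (Us n) i \<inter> fam2 V (Us n) j))
      ((\<lambda>i\<in>{..<2}. \<lambda>j\<in>{..<2}. fam2 (fam2 (Ide (FF V) y) psi j)
         (fam2 (grpd_inv (FF (V \<inter> Us n)) psi) (Ide (FF (Us n)) (fst s n)) j) i) i j)
      (resA (fam2 V (Us n) i \<inter> fam2 V (Us n) j) (fam2 V (Us n) i) (G i))
      = resA (fam2 V (Us n) i \<inter> fam2 V (Us n) j) (fam2 V (Us n) j) (G j)"
    using descent_2[OF split_open_cover(7)] descent_obj_two[OF opens y xn psi]
    unfolding effective_descent_def by fastforce
  define gg where "gg i = (if i < n then Comp (FF (Us i)) (g i) (resA (Us i) V (G 0)) else G 1)" for i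
  have G0: "G 0 \<in> Arr (FF V)" "Dom (FF V) (G 0) = resO V U a" "Cod (FF V) (G 0) = y"
    and G1: "G 1 \<in> Arr (FF (Us n))" "Dom (FF (Us n)) (G 1) = resO (Us n) U a" "Cod (FF (Us n)) (G 1) = fst s n"
    using G by (simp_all add: all_less_2)
  have "Comp (FF (V \<inter> Us n)) psi (resA (V \<inter> Us n) V (G 0)) = resA (V \<inter> Us n) (Us n) (G 1)"
    using G_compat by (simp add: all_less_2)
  note glued = glued_arr[OF y g g_compat psi psi_restrict a G0 G1 this gg_def]
    glued_compat[OF y g g_compat psi psi_restrict a G0 G1 this gg_def]
  show ?thesis using a glued by blast
qed

end

lemma effective_descent_from_2:
  assumes homs2: "\<And>V Vs. open_cover X V 2 Vs \<Longrightarrow> homs_glue 2 V Vs"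
    and descent2: "\<And>V Vs. open_cover X V 2 Vs \<Longrightarrow> effective_descent 2 V Vs"
    and n: "2 \<le> n"
  shows "open_cover X U n Us \<Longrightarrow> effective_descent n U Us"
  using n
proof (induction n arbitrary: U Us rule: dec_induct)
  case (step n)
  show ?case unfolding effective_descent_def
    using effective_descent_Suc_obj[OF step.prems refl _ homs_glue_from_2[OF homs2 step.hyps(1)] descent2 step.IH]
    by blast
qed (use descent2 in blast)

lemma st_cond_from_2:
  assumes st2: "st_cond X FF resO resA 2" and n: "2 \<le> n"
  shows "st_cond X FF resO resA n"
proof -
  have homs2: "\<And>V Vs. open_cover X V 2 Vs \<Longrightarrow> homs_glue 2 V Vs"
    and descent2: "\<And>V Vs. open_cover X V 2 Vs \<Longrightarrow> effective_descent 2 V Vs"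
    using st2 unfolding st_cond_iff by blast+
  show ?thesis unfolding st_cond_iff
    using homs_glue_from_2[OF homs2 n] effective_descent_from_2[OF homs2 descent2 n] by blast
qed

end

theorem lemma6p2:
  fixes X :: "'a topology"
    and FF :: "'a set \<Rightarrow> ('o, 'm) cat"
    and resO :: "'a set \<Rightarrow> 'a set \<Rightarrow> 'o \<Rightarrow> 'o"
    and resA :: "'a set \<Rightarrow> 'a set \<Rightarrow> 'm \<Rightarrow> 'm"
  assumes "grp_presheaf X FF resO resA"
  shows "(sh_cond X FF resO resA 2 \<longrightarrow> (\<forall>n\<ge>2. sh_cond X FF resO resA n)) \<and>
         (st_cond X FF resO resA 2 \<longrightarrow> (\<forall>n\<ge>2. st_cond X FF resO resA n))"
proof -
  interpret groupoid_presheaf X FF resO resA by unfold_locales (fact assms)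
  show ?thesis using sh_cond_from_2 st_cond_from_2 by blast
qed

end
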